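(* For every non-principal ultrafilter $\mathcal U$ on $\mathbb N$, the ultrapower $(\mathcal A/\mathcal J)_{\mathcal U}$ is not simple, and hence not purely infinite.
   Context: Let $\mathrm{Cu}_2$ be the involutive monoid with identity $e$ and zero element $\lozenge$ (so $\lozenge t=\lozenge=t\lozenge$ for all $t$), generated by $s_1,s_2,s_1^*,s_2^*$ subject to $s_1^*s_1=e=s_2^*s_2$ and $s_1^*s_2=\lozenge=s_2^*s_1$, with involution $t\mapsto t^*$ satisfying $(t^* )^*=t$, $(tu)^*=u^*t^*$. Let $\mathcal A=\ell^1(\mathrm{Cu}_2\setminus\{\lozenge\})$ with product $\#$ determined by bilinearity and continuity from $\delta_s\#\delta_t=\delta_{st}$ if $st\neq\lozenge$ and $\delta_s\#\delta_t=0$ if $st=\lozenge$; this is a unital Banach $*$-algebra with unit $\delta_e$. Let $f_0=\delta_e-\delta_{s_1s_1^*}-\delta_{s_2s_2^*}$ and let $\mathcal J$ be the closed two-sided ideal of $\mathcal A$ generated by $f_0$; $\mathcal A/\mathcal J$ carries the quotient norm. For a Banach algebra $\mathcal B$, the ultrapower is $(\mathcal B)_{\mathcal U}=\ell^\infty(\mathcal B)/c_{\mathcal U}(\mathcal B)$, where $\ell^\infty(\mathcal B)$ is the Banach algebra of bounded sequences with pointwise operations and sup norm and $c_{\mathcal U}(\mathcal B)$ is the closed ideal of sequences $(b_n)$ with $\lim_{n\to\mathcal U}\|b_n\|=0$. A unital algebra is purely infinite if it is not a division algebra and for every non-zero $a$ there exist $b,c$ with $bac=1$. *)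

theory Defs
  imports "HOL-Analysis.Analysis" "HOL-Algebra.QuotRing"
begin

text \<open>Generators: s1, s2, s1*, s2*, and the zero element (written Zg).\<close>
datatype gen = S1 | S2 | S1s | S2s | Zg

inductive cu_cong :: "gen list \<Rightarrow> gen list \<Rightarrow> bool" where
  cu_refl: "cu_cong u u"
| cu_sym: "cu_cong u v \<Longrightarrow> cu_cong v u"
| cu_trans: "cu_cong u v \<Longrightarrow> cu_cong v w \<Longrightarrow> cu_cong u w"
| cu_ctxt: "cu_cong u v \<Longrightarrow> cu_cong (x @ u @ y) (x @ v @ y)"
| cu_rel1: "cu_cong [S1s, S1] []"
| cu_rel2: "cu_cong [S2s, S2] []"
| cu_rel3: "cu_cong [S1s, S2] [Zg]"
| cu_rel4: "cu_cong [S2s, S1] [Zg]"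
| cu_zl: "cu_cong [Zg, t] [Zg]"
| cu_zr: "cu_cong [t, Zg] [Zg]"

definition cu_cls :: "gen list \<Rightarrow> gen list set" where
  "cu_cls w = {v. cu_cong w v}"

definition Cu2 :: "gen list set set" where
  "Cu2 = range cu_cls"

definition cu_e :: "gen list set" where "cu_e = cu_cls []"
definition cu_zero :: "gen list set" where "cu_zero = cu_cls [Zg]"

definition cu_rep :: "gen list set \<Rightarrow> gen list" where
  "cu_rep C = (SOME w. C = cu_cls w)"

definition cu_mult :: "gen list set \<Rightarrow> gen list set \<Rightarrow> gen list set" where
  "cu_mult C D = cu_cls (cu_rep C @ cu_rep D)"

definition Cu2nz :: "gen list set set" where
  "Cu2nz = Cu2 - {cu_zero}"

type_synonym l1elt = "gen list set \<Rightarrow> complex"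

definition l1 :: "l1elt set" where
  "l1 = {f. (\<forall>s. s \<notin> Cu2nz \<longrightarrow> f s = 0) \<and> (\<lambda>s. norm (f s)) summable_on Cu2nz}"

definition l1norm :: "l1elt \<Rightarrow> real" where
  "l1norm f = (\<Sum>\<^sub>\<infinity>s\<in>Cu2nz. norm (f s))"

text \<open>The product \<open>#\<close>: the bilinear continuous extension of
  delta_s # delta_t = delta_(st) (or 0 if st is the zero), i.e. convolution.\<close>
definition conv :: "l1elt \<Rightarrow> l1elt \<Rightarrow> l1elt" where
  "conv f g w = (if w \<in> Cu2nz then
      (\<Sum>\<^sub>\<infinity>(s, t)\<in>{(s, t). s \<in> Cu2nz \<and> t \<in> Cu2nz \<and> cu_mult s t = w}. f s * g t)
    else 0)"

definition delta :: "gen list set \<Rightarrow> l1elt" where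
  "delta s = (\<lambda>t. if t = s then 1 else 0)"

definition A_ring :: "l1elt ring" where
  "A_ring = \<lparr>carrier = l1, mult = conv, one = delta cu_e, zero = (\<lambda>_. 0), add = (\<lambda>f g s. f s + g s)\<rparr>"

definition f0 :: l1elt where
  "f0 = (\<lambda>s. delta cu_e s - delta (cu_cls [S1, S1s]) s - delta (cu_cls [S2, S2s]) s)"

definition l1_closed :: "l1elt set \<Rightarrow> bool" where
  "l1_closed I \<longleftrightarrow> (\<forall>X x. (\<forall>n. X n \<in> I) \<and> x \<in> l1 \<and> (\<lambda>n. l1norm (\<lambda>s. X n s - x s)) \<longlonglongrightarrow> 0 \<longrightarrow> x \<in> I)"

definition J :: "l1elt set" where
  "J = \<Inter>{I. ideal I A_ring \<and> l1_closed I \<and> f0 \<in> I}"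

definition AJ :: "l1elt set ring" where
  "AJ = A_ring Quot J"

definition qnorm :: "l1elt set \<Rightarrow> real" where
  "qnorm C = Inf {l1norm x | x. x \<in> C}"

definition linf :: "('a, 'b) ring_scheme \<Rightarrow> ('a \<Rightarrow> real) \<Rightarrow> (nat \<Rightarrow> 'a) ring" where
  "linf B N = \<lparr>carrier = {X. (\<forall>n. X n \<in> carrier B) \<and> (\<exists>M. \<forall>n. N (X n) \<le> M)},
     mult = (\<lambda>X Y n. X n \<otimes>\<^bsub>B\<^esub> Y n), one = (\<lambda>n. \<one>\<^bsub>B\<^esub>),
     zero = (\<lambda>n. \<zero>\<^bsub>B\<^esub>), add = (\<lambda>X Y n. X n \<oplus>\<^bsub>B\<^esub> Y n)\<rparr>"

definition cU :: "('a, 'b) ring_scheme \<Rightarrow> ('a \<Rightarrow> real) \<Rightarrow> nat filter \<Rightarrow> (nat \<Rightarrow> 'a) set" where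
  "cU B N U = {X \<in> carrier (linf B N). ((\<lambda>n. N (X n)) \<longlongrightarrow> 0) U}"

definition ultrapower :: "('a, 'b) ring_scheme \<Rightarrow> ('a \<Rightarrow> real) \<Rightarrow> nat filter \<Rightarrow> (nat \<Rightarrow> 'a) set ring" where
  "ultrapower B N U = linf B N Quot cU B N U"

definition nat_ultrafilter :: "nat filter \<Rightarrow> bool" where
  "nat_ultrafilter U \<longleftrightarrow> U \<noteq> bot \<and> (\<forall>P. eventually P U \<or> eventually (\<lambda>n. \<not> P n) U)"

definition nonprincipal :: "nat filter \<Rightarrow> bool" where
  "nonprincipal U \<longleftrightarrow> (\<forall>m. eventually (\<lambda>n. n \<noteq> m) U)"

definition simple_ring :: "('a, 'b) ring_scheme \<Rightarrow> bool" where
  "simple_ring R \<longleftrightarrow> carrier R \<noteq> {\<zero>\<^bsub>R\<^esub>} \<and>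
     (\<forall>I. ideal I R \<longrightarrow> I = {\<zero>\<^bsub>R\<^esub>} \<or> I = carrier R)"

definition division_ring :: "('a, 'b) ring_scheme \<Rightarrow> bool" where
  "division_ring R \<longleftrightarrow> \<one>\<^bsub>R\<^esub> \<noteq> \<zero>\<^bsub>R\<^esub> \<and>
     (\<forall>a \<in> carrier R. a \<noteq> \<zero>\<^bsub>R\<^esub> \<longrightarrow> a \<in> Units R)"

definition purely_infinite :: "('a, 'b) ring_scheme \<Rightarrow> bool" where
  "purely_infinite R \<longleftrightarrow> \<not> division_ring R \<and>
     (\<forall>a \<in> carrier R. a \<noteq> \<zero>\<^bsub>R\<^esub> \<longrightarrow>
        (\<exists>b \<in> carrier R. \<exists>c \<in> carrier R. b \<otimes>\<^bsub>R\<^esub> a \<otimes>\<^bsub>R\<^esub> c = \<one>\<^bsub>R\<^esub>))"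

end

theory Submission
  imports Defs
begin

(* Cu_2 acts on the natural numbers by partial injections: s1 k = 2k, s2 k = 2k+1, the
   adjoints are their partial inverses and the zero acts as the empty map. The ranges of s1
   and s2 partition the naturals, so f0 acts as zero, and every class in A/J has a
   well-defined matrix over N x N. The supremum of its row sums is a submultiplicative
   seminorm on A/J dominated by the quotient norm, and each column sum is bounded by the
   quotient norm as well.

   The averages x_N = (1/N) (s2 + s1 s2 + ... + s1^(N-1) s2) of isometries with pairwise
   disjoint ranges have row norm at most 1/N, while column 0 of x_N sums to 1, so their
   quotient norm is at least 1. In the ultrapower the classes of bounded sequences with row
   norms tending to 0 therefore form an ideal containing the nonzero class of (x_(n+1)), but
   not the unit, whose row norm is 1. A proper nonzero ideal excludes simplicity, and also
   pure infiniteness, because b a c = 1 would put the unit into it. *)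

section \<open>Seminormed rings and their ultrapowers\<close>

lemma (in ring) idealI_absorbing:
  assumes sub: "I \<subseteq> carrier R" and zero: "\<zero> \<in> I"
    and add: "\<And>a b. a \<in> I \<Longrightarrow> b \<in> I \<Longrightarrow> a \<oplus> b \<in> I"
    and left: "\<And>a x. a \<in> I \<Longrightarrow> x \<in> carrier R \<Longrightarrow> x \<otimes> a \<in> I"
    and right: "\<And>a x. a \<in> I \<Longrightarrow> x \<in> carrier R \<Longrightarrow> a \<otimes> x \<in> I"
  shows "ideal I R"
proof -
  have "\<ominus> a \<in> I" if "a \<in> I" for a
    using left[OF that, of "\<ominus> \<one>"] that sub by (auto simp: l_minus)
  then have "subgroup I (add_monoid R)"
    by (intro subgroup.intro) (use sub zero add in \<open>auto simp: a_inv_def[symmetric]\<close>)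
  then show ?thesis
    by (rule idealI[OF ring_axioms]) (auto intro: left right)
qed

lemma (in ring) not_simple_ringI:
  assumes "ideal I R" "a \<in> I" "a \<noteq> \<zero>" "\<one> \<notin> I"
  shows "\<not> simple_ring R"
  using assms ideal.Icarr[OF assms(1)] unfolding simple_ring_def by auto

lemma (in ring) not_purely_infiniteI:
  assumes I: "ideal I R" and "a \<in> I" "a \<noteq> \<zero>" "\<one> \<notin> I"
  shows "\<not> purely_infinite R"
proof
  assume "purely_infinite R"
  then obtain b c where "b \<in> carrier R" "c \<in> carrier R" "b \<otimes> a \<otimes> c = \<one>"
    using assms ideal.Icarr[OF I] unfolding purely_infinite_def by blast
  then show False
    using assms ideal.I_l_closed[OF I] ideal.I_r_closed[OF I] by metis
qed

text \<open>The image of \<open>K\<close> in \<open>R Quot I\<close> is a nonzero ideal missing the unit.\<close>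

lemma (in ring) quotient_not_simple_not_purely_infinite:
  assumes I: "ideal I R" and K: "ideal K R" and "I \<subset> K" and one: "\<one> \<notin> K"
  shows "\<not> simple_ring (R Quot I) \<and> \<not> purely_infinite (R Quot I)"
proof -
  interpret I: ideal I R by (rule I)
  interpret Q: ring "R Quot I" by (rule I.quotient_is_ring)
  let ?M = "(+>) I ` K"
  have M: "ideal ?M (R Quot I)" by (rule ring_ideal_imp_quot_ideal[OF I K])
  obtain a where a: "a \<in> K" "a \<notin> I" using \<open>I \<subset> K\<close> by blast
  have "I +> a \<noteq> I"
    using I.a_rcos_self[of a] a ideal.Icarr[OF K] by auto
  then have nonzero: "I +> a \<noteq> \<zero>\<^bsub>R Quot I\<^esub>" by (simp add: FactRing_def)
  have "\<Union> ?M = K"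
    using ideal_incl_iff[OF I K] \<open>I \<subset> K\<close> by auto
  then have "I +> \<one> \<notin> ?M"
    using canonical_proj_vimage_mem_iff[OF I, of ?M] M one
    by (metis additive_subgroup.a_subset ideal.axioms(1) one_closed)
  then have unit: "\<one>\<^bsub>R Quot I\<^esub> \<notin> ?M" by (simp add: FactRing_def)
  show ?thesis
    using Q.not_simple_ringI[OF M _ nonzero unit] Q.not_purely_infiniteI[OF M _ nonzero unit] a
    by blast
qed

locale ring_seminorm = ring R for R (structure) +
  fixes N :: "'a \<Rightarrow> real"
  assumes seminorm_nonneg: "x \<in> carrier R \<Longrightarrow> 0 \<le> N x"
    and seminorm_zero: "N \<zero> = 0"
    and seminorm_add: "x \<in> carrier R \<Longrightarrow> y \<in> carrier R \<Longrightarrow> N (x \<oplus> y) \<le> N x + N y"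
    and seminorm_mult: "x \<in> carrier R \<Longrightarrow> y \<in> carrier R \<Longrightarrow> N (x \<otimes> y) \<le> N x * N y"
    and seminorm_minus: "x \<in> carrier R \<Longrightarrow> N (\<ominus> x) \<le> N x"

lemma linf_carrier:
  "carrier (linf B N) = {X. (\<forall>n. X n \<in> carrier B) \<and> (\<exists>M. \<forall>n. N (X n) \<le> M)}"
  unfolding linf_def by simp

lemma linf_ops:
  "X \<otimes>\<^bsub>linf B N\<^esub> Y = (\<lambda>n. X n \<otimes>\<^bsub>B\<^esub> Y n)" "\<one>\<^bsub>linf B N\<^esub> = (\<lambda>n. \<one>\<^bsub>B\<^esub>)"
  "\<zero>\<^bsub>linf B N\<^esub> = (\<lambda>n. \<zero>\<^bsub>B\<^esub>)" "X \<oplus>\<^bsub>linf B N\<^esub> Y = (\<lambda>n. X n \<oplus>\<^bsub>B\<^esub> Y n)"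
  unfolding linf_def by simp_all

lemma linf_memD: "X \<in> carrier (linf B N) \<Longrightarrow> X n \<in> carrier B"
  by (simp add: linf_carrier)

lemma linf_boundedE:
  assumes "X \<in> carrier (linf B N)"
  obtains M where "\<And>n. N (X n) \<le> M"
  using assms by (auto simp: linf_carrier)

context ring_seminorm
begin

lemma linf_const: "c \<in> carrier R \<Longrightarrow> (\<lambda>n. c) \<in> carrier (linf R N)"
  by (auto simp: linf_carrier)

lemma linf_add_closed:
  assumes X: "X \<in> carrier (linf R N)" and Y: "Y \<in> carrier (linf R N)"
  shows "X \<oplus>\<^bsub>linf R N\<^esub> Y \<in> carrier (linf R N)"
proof -
  obtain M1 M2 where "\<And>n. N (X n) \<le> M1" "\<And>n. N (Y n) \<le> M2"
    using X Y by (meson linf_boundedE)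
  then have "N (X n \<oplus> Y n) \<le> M1 + M2" for n
    using seminorm_add[OF linf_memD[OF X] linf_memD[OF Y], of n n] by (meson add_mono order_trans)
  then show ?thesis
    using linf_memD[OF X] linf_memD[OF Y] by (auto simp: linf_carrier linf_ops)
qed

lemma linf_mult_closed:
  assumes X: "X \<in> carrier (linf R N)" and Y: "Y \<in> carrier (linf R N)"
  shows "X \<otimes>\<^bsub>linf R N\<^esub> Y \<in> carrier (linf R N)"
proof -
  obtain M1 M2 where M: "\<And>n. N (X n) \<le> M1" "\<And>n. N (Y n) \<le> M2"
    using X Y by (meson linf_boundedE)
  have "N (X n \<otimes> Y n) \<le> M1 * M2" for n
  proof -
    have "N (X n \<otimes> Y n) \<le> N (X n) * N (Y n)"
      using seminorm_mult linf_memD[OF X] linf_memD[OF Y] by blast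
    also have "\<dots> \<le> M1 * M2"
      using M seminorm_nonneg[OF linf_memD[OF X], of n] seminorm_nonneg[OF linf_memD[OF Y], of n]
      by (intro mult_mono) (auto intro: order_trans)
    finally show ?thesis .
  qed
  then show ?thesis
    using linf_memD[OF X] linf_memD[OF Y] by (auto simp: linf_carrier linf_ops)
qed

lemma linf_minus_closed:
  assumes X: "X \<in> carrier (linf R N)"
  shows "(\<lambda>n. \<ominus> X n) \<in> carrier (linf R N)"
proof -
  obtain M where "\<And>n. N (X n) \<le> M" using X by (meson linf_boundedE)
  then have "N (\<ominus> X n) \<le> M" for n
    using seminorm_minus[OF linf_memD[OF X]] order_trans by blast
  then show ?thesis using linf_memD[OF X] by (auto simp: linf_carrier)
qed

lemma linf_ring: "ring (linf R N)"
proof (rule ringI)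
  show "abelian_group (linf R N)"
  proof (rule abelian_groupI)
    fix X Y Z assume X: "X \<in> carrier (linf R N)" and Y: "Y \<in> carrier (linf R N)"
      and Z: "Z \<in> carrier (linf R N)"
    show "X \<oplus>\<^bsub>linf R N\<^esub> Y \<in> carrier (linf R N)" by (rule linf_add_closed[OF X Y])
    have n: "\<And>n. X n \<in> carrier R" "\<And>n. Y n \<in> carrier R" "\<And>n. Z n \<in> carrier R"
      using X Y Z by (simp_all add: linf_memD)
    show "X \<oplus>\<^bsub>linf R N\<^esub> Y \<oplus>\<^bsub>linf R N\<^esub> Z = X \<oplus>\<^bsub>linf R N\<^esub> (Y \<oplus>\<^bsub>linf R N\<^esub> Z)"
      by (simp add: linf_ops n a_assoc)
    show "X \<oplus>\<^bsub>linf R N\<^esub> Y = Y \<oplus>\<^bsub>linf R N\<^esub> X"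
      by (simp add: linf_ops n a_comm)
    show "\<zero>\<^bsub>linf R N\<^esub> \<oplus>\<^bsub>linf R N\<^esub> X = X"
      by (simp add: linf_ops n)
    show "\<exists>Y\<in>carrier (linf R N). Y \<oplus>\<^bsub>linf R N\<^esub> X = \<zero>\<^bsub>linf R N\<^esub>"
      using linf_minus_closed[OF X] linf_memD[OF X] by (intro bexI) (auto simp: linf_ops l_neg)
  qed (simp add: linf_ops linf_const)
  show "monoid (linf R N)"
  proof (rule monoidI)
    show "X \<otimes>\<^bsub>linf R N\<^esub> Y \<in> carrier (linf R N)"
      if "X \<in> carrier (linf R N)" "Y \<in> carrier (linf R N)" for X Y
      using that by (rule linf_mult_closed)
  qed (simp_all add: linf_const linf_ops linf_memD m_assoc)
qed (simp_all add: linf_ops linf_memD l_distr r_distr)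

end

definition null_seqs ::
    "('a, 'b) ring_scheme \<Rightarrow> ('a \<Rightarrow> real) \<Rightarrow> ('a \<Rightarrow> real) \<Rightarrow> nat filter \<Rightarrow> (nat \<Rightarrow> 'a) set" where
  "null_seqs B N p U = {X \<in> carrier (linf B N). ((\<lambda>n. p (X n)) \<longlongrightarrow> 0) U}"

lemma cU_eq_null_seqs: "cU B N U = null_seqs B N N U"
  unfolding cU_def null_seqs_def ..

lemma (in ring_seminorm) is_ring_seminorm: "ring_seminorm R N"
  by (rule ring_seminorm_axioms)

lemma (in ring_seminorm) tendsto_zero_le:
  assumes "\<And>n. X n \<in> carrier R" "\<And>n. N (X n) \<le> g n" "(g \<longlongrightarrow> 0) F"
  shows "((\<lambda>n. N (X n)) \<longlongrightarrow> 0) F"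
proof (rule Lim_null_comparison[OF _ assms(3)])
  have "norm (N (X n)) \<le> g n" for n
    using assms(2)[of n] seminorm_nonneg[OF assms(1)[of n]] by simp
  then show "\<forall>\<^sub>F n in F. norm (N (X n)) \<le> g n" by simp
qed

lemma (in ring_seminorm) null_seqs_mult_bounded:
  assumes "ring_seminorm R p" and dom: "\<And>x. x \<in> carrier R \<Longrightarrow> p x \<le> N x"
    and X: "X \<in> null_seqs R N p U" and Y: "Y \<in> carrier (linf R N)"
  shows "((\<lambda>n. p (Y n \<otimes> X n)) \<longlongrightarrow> 0) U" "((\<lambda>n. p (X n \<otimes> Y n)) \<longlongrightarrow> 0) U"
proof -
  interpret p: ring_seminorm R p by fact
  obtain M where M: "\<And>n. N (Y n) \<le> M" using Y by (meson linf_boundedE)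
  have Xn: "\<And>n. X n \<in> carrier R" and lim: "((\<lambda>n. p (X n)) \<longlongrightarrow> 0) U"
    using X by (auto simp: null_seqs_def linf_memD)
  have Yn: "\<And>n. Y n \<in> carrier R" using Y by (rule linf_memD)
  have pY: "p (Y n) \<le> M" for n using dom[OF Yn] M order_trans by blast
  have le: "p (Y n \<otimes> X n) \<le> M * p (X n)" "p (X n \<otimes> Y n) \<le> M * p (X n)" for n
    using p.seminorm_mult[OF Yn Xn, of n n] p.seminorm_mult[OF Xn Yn, of n n] pY[of n]
      p.seminorm_nonneg[OF Xn, of n]
    by (metis mult.commute mult_right_mono order_trans)+
  have null: "((\<lambda>n. M * p (X n)) \<longlongrightarrow> 0) U"
    using tendsto_mult_right_zero[OF lim] by simp
  show "((\<lambda>n. p (Y n \<otimes> X n)) \<longlongrightarrow> 0) U"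
    by (rule p.tendsto_zero_le[OF _ le(1) null]) (simp add: Xn Yn)
  show "((\<lambda>n. p (X n \<otimes> Y n)) \<longlongrightarrow> 0) U"
    by (rule p.tendsto_zero_le[OF _ le(2) null]) (simp add: Xn Yn)
qed

lemma (in ring_seminorm) null_seqs_ideal:
  assumes "ring_seminorm R p" and dom: "\<And>x. x \<in> carrier R \<Longrightarrow> p x \<le> N x"
  shows "ideal (null_seqs R N p U) (linf R N)"
proof -
  interpret p: ring_seminorm R p by fact
  interpret L: ring "linf R N" by (rule linf_ring)
  show ?thesis
  proof (rule L.idealI_absorbing)
    show "null_seqs R N p U \<subseteq> carrier (linf R N)" by (auto simp: null_seqs_def)
    show "\<zero>\<^bsub>linf R N\<^esub> \<in> null_seqs R N p U"
      by (simp add: null_seqs_def linf_ops linf_const p.seminorm_zero)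
  next
    fix X Y assume X: "X \<in> null_seqs R N p U" and Y: "Y \<in> null_seqs R N p U"
    then have Xn: "\<And>n. X n \<in> carrier R" and Yn: "\<And>n. Y n \<in> carrier R"
      by (auto simp: null_seqs_def linf_memD)
    have "((\<lambda>n. p (X n) + p (Y n)) \<longlongrightarrow> 0) U"
      using X Y tendsto_add[of "\<lambda>n. p (X n)" 0 U "\<lambda>n. p (Y n)" 0] by (simp add: null_seqs_def)
    then have "((\<lambda>n. p (X n \<oplus> Y n)) \<longlongrightarrow> 0) U"
      using Xn Yn p.seminorm_add by (intro p.tendsto_zero_le) auto
    then show "X \<oplus>\<^bsub>linf R N\<^esub> Y \<in> null_seqs R N p U"
      using X Y linf_add_closed by (simp add: null_seqs_def linf_ops)
  next
    fix X Y assume X: "X \<in> null_seqs R N p U" and Y: "Y \<in> carrier (linf R N)"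
    then have XL: "X \<in> carrier (linf R N)" by (simp add: null_seqs_def)
    show "Y \<otimes>\<^bsub>linf R N\<^esub> X \<in> null_seqs R N p U" "X \<otimes>\<^bsub>linf R N\<^esub> Y \<in> null_seqs R N p U"
      using null_seqs_mult_bounded[OF assms X Y] linf_mult_closed[OF XL Y] linf_mult_closed[OF Y XL]
      by (simp_all add: null_seqs_def linf_ops)
  qed
qed

text \<open>The \<open>p\<close>-null sequences form a proper ideal strictly containing \<open>cU R N U\<close>.\<close>

lemma (in ring_seminorm) ultrapower_not_simple_not_purely_infinite:
  assumes p: "ring_seminorm R p" and dom: "\<And>x. x \<in> carrier R \<Longrightarrow> p x \<le> N x"
    and U: "U \<noteq> bot" and one: "p \<one> \<noteq> 0"
    and X: "X \<in> null_seqs R N p U" "X \<notin> cU R N U"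
  shows "\<not> simple_ring (ultrapower R N U) \<and> \<not> purely_infinite (ultrapower R N U)"
proof -
  interpret p: ring_seminorm R p by (rule p)
  interpret L: ring "linf R N" by (rule linf_ring)
  have null_N: "ideal (cU R N U) (linf R N)"
    unfolding cU_eq_null_seqs by (rule null_seqs_ideal[OF is_ring_seminorm]) simp
  have null_p: "ideal (null_seqs R N p U) (linf R N)"
    by (rule null_seqs_ideal[OF p dom])
  have "cU R N U \<subseteq> null_seqs R N p U"
  proof
    fix Y assume "Y \<in> cU R N U"
    then have Y: "Y \<in> carrier (linf R N)" and lim: "((\<lambda>n. N (Y n)) \<longlongrightarrow> 0) U"
      by (auto simp: cU_def)
    have Yn: "\<And>n. Y n \<in> carrier R" using Y by (rule linf_memD)
    have "((\<lambda>n. p (Y n)) \<longlongrightarrow> 0) U" by (rule p.tendsto_zero_le[OF Yn dom[OF Yn] lim])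
    then show "Y \<in> null_seqs R N p U" using Y by (simp add: null_seqs_def)
  qed
  then have strict: "cU R N U \<subset> null_seqs R N p U" using X by blast
  have "\<one>\<^bsub>linf R N\<^esub> \<notin> null_seqs R N p U"
    using one by (simp add: null_seqs_def linf_ops tendsto_const_iff[OF U])
  then show ?thesis
    unfolding ultrapower_def by (rule L.quotient_not_simple_not_purely_infinite[OF null_N null_p strict])
qed

lemma le_Inf_add:
  fixes S T :: "real set"
  assumes S: "S \<noteq> {}" and T: "T \<noteq> {}" and le: "\<And>a b. a \<in> S \<Longrightarrow> b \<in> T \<Longrightarrow> c \<le> a + b"
  shows "c \<le> Inf S + Inf T"
proof -
  have "c - b \<le> Inf S" if "b \<in> T" for b
    using le[OF _ that] by (intro cInf_greatest[OF S]) (simp add: algebra_simps)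
  then have "c - Inf S \<le> Inf T"
    by (intro cInf_greatest[OF T]) (simp add: algebra_simps)
  then show ?thesis by simp
qed

lemma le_Inf_mult:
  fixes S T :: "real set"
  assumes S: "S \<noteq> {}" and T: "T \<noteq> {}"
    and nonneg: "\<And>a. a \<in> S \<Longrightarrow> 0 \<le> a" "\<And>b. b \<in> T \<Longrightarrow> 0 \<le> b"
    and le: "\<And>a b. a \<in> S \<Longrightarrow> b \<in> T \<Longrightarrow> c \<le> a * b"
  shows "c \<le> Inf S * Inf T"
proof (cases "c \<le> 0")
  case True
  have "0 \<le> Inf S" "0 \<le> Inf T"
    using S T nonneg by (auto intro: cInf_greatest)
  then show ?thesis using True by (simp add: order_trans)
next
  case False
  obtain a0 b0 where a0: "a0 \<in> S" and b0: "b0 \<in> T" using S T by blast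
  have pos: "0 < a" "0 < b" if "a \<in> S" "b \<in> T" for a b
    using le[OF that] nonneg(1)[OF that(1)] nonneg(2)[OF that(2)] False
    by (metis less_eq_real_def mult_zero_left mult_zero_right)+
  have bound: "c / b \<le> Inf S" if "b \<in> T" for b
    using le[OF _ that] pos[OF _ that] S by (intro cInf_greatest) (auto simp: divide_le_eq)
  have InfS: "0 < Inf S"
    using bound[OF b0] pos[OF a0 b0] False by (smt (verit) divide_pos_pos)
  have "c / Inf S \<le> Inf T"
  proof (rule cInf_greatest[OF T])
    fix b assume "b \<in> T"
    then have "c \<le> Inf S * b" using bound pos[OF a0] by (simp add: divide_le_eq mult.commute)
    then show "c / Inf S \<le> b" using InfS by (simp add: divide_le_eq mult.commute)
  qed
  then show ?thesis using InfS by (simp add: divide_le_eq mult.commute)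
qed

definition quot_seminorm :: "('a \<Rightarrow> real) \<Rightarrow> 'a set \<Rightarrow> real" where
  "quot_seminorm N C = Inf (N ` C)"

lemma (in ideal) quotient_carrier_rep:
  assumes "C \<in> carrier (R Quot I)" "x \<in> C"
  shows "x \<in> carrier R" "C = I +> x"
proof -
  obtain y where y: "y \<in> carrier R" "C = I +> y"
    using assms(1) by (auto simp: FactRing_def A_RCOSETS_def')
  then show "C = I +> x" using a_repr_independence' assms(2) by blast
  show "x \<in> carrier R" using y assms(2) a_r_coset_subset_G[OF a_subset] by blast
qed

lemma (in ideal) quotient_carrier_nonempty:
  "C \<in> carrier (R Quot I) \<Longrightarrow> C \<noteq> {}"
  using a_rcos_self by (auto simp: FactRing_def A_RCOSETS_def')

context ring_seminorm
begin

context
  fixes I assumes I: "ideal I R"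
begin

lemma quot_seminorm_le:
  assumes "C \<in> carrier (R Quot I)" "x \<in> C"
  shows "quot_seminorm N C \<le> N x"
proof -
  have "0 \<le> N y" if "y \<in> C" for y
    using ideal.quotient_carrier_rep(1)[OF I assms(1) that] by (rule seminorm_nonneg)
  then show ?thesis
    unfolding quot_seminorm_def using assms(2) by (intro cInf_lower bdd_belowI[of _ 0]) auto
qed

lemma le_quot_seminorm:
  assumes "C \<in> carrier (R Quot I)" "\<And>x. x \<in> C \<Longrightarrow> c \<le> N x"
  shows "c \<le> quot_seminorm N C"
  unfolding quot_seminorm_def
  using ideal.quotient_carrier_nonempty[OF I assms(1)] assms(2) by (intro cInf_greatest) auto

lemma quot_seminorm_nonneg:
  assumes C: "C \<in> carrier (R Quot I)"
  shows "0 \<le> quot_seminorm N C"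
  using C by (rule le_quot_seminorm) (simp add: seminorm_nonneg ideal.quotient_carrier_rep(1)[OF I C])

lemma quot_seminorm_zero: "quot_seminorm N \<zero>\<^bsub>R Quot I\<^esub> = 0"
proof -
  interpret I: ideal I R by (rule I)
  interpret Q: ring "R Quot I" by (rule I.quotient_is_ring)
  have "\<zero>\<^bsub>R Quot I\<^esub> = I" unfolding FactRing_def by simp
  then have zero: "\<zero> \<in> \<zero>\<^bsub>R Quot I\<^esub>"
    using additive_subgroup.zero_closed[OF ideal.axioms(1)[OF I]] by simp
  have "quot_seminorm N \<zero>\<^bsub>R Quot I\<^esub> \<le> 0"
    using quot_seminorm_le[OF Q.zero_closed zero] seminorm_zero by simp
  then show ?thesis using quot_seminorm_nonneg[OF Q.zero_closed] by linarith
qed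

lemma quot_seminorm_add:
  assumes C: "C \<in> carrier (R Quot I)" and D: "D \<in> carrier (R Quot I)"
  shows "quot_seminorm N (C \<oplus>\<^bsub>R Quot I\<^esub> D) \<le> quot_seminorm N C + quot_seminorm N D"
  unfolding quot_seminorm_def[of _ C] quot_seminorm_def[of _ D]
proof (rule le_Inf_add)
  interpret I: ideal I R by (rule I)
  interpret Q: ring "R Quot I" by (rule I.quotient_is_ring)
  show "N ` C \<noteq> {}" "N ` D \<noteq> {}"
    using ideal.quotient_carrier_nonempty[OF I] C D by auto
  fix a b assume "a \<in> N ` C" "b \<in> N ` D"
  then obtain x y where xy: "x \<in> C" "y \<in> D" and ab: "a = N x" "b = N y" by blast
  then have "x \<oplus> y \<in> C \<oplus>\<^bsub>R Quot I\<^esub> D"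
    unfolding FactRing_def set_add_defs by auto
  then have "quot_seminorm N (C \<oplus>\<^bsub>R Quot I\<^esub> D) \<le> N (x \<oplus> y)"
    by (rule quot_seminorm_le[OF Q.add.m_closed[OF C D]])
  also have "\<dots> \<le> a + b"
    using ab ideal.quotient_carrier_rep(1)[OF I] C D xy by (simp add: seminorm_add)
  finally show "quot_seminorm N (C \<oplus>\<^bsub>R Quot I\<^esub> D) \<le> a + b" .
qed

lemma quot_seminorm_mult:
  assumes C: "C \<in> carrier (R Quot I)" and D: "D \<in> carrier (R Quot I)"
  shows "quot_seminorm N (C \<otimes>\<^bsub>R Quot I\<^esub> D) \<le> quot_seminorm N C * quot_seminorm N D"
  unfolding quot_seminorm_def[of _ C] quot_seminorm_def[of _ D]
proof (rule le_Inf_mult)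
  interpret I: ideal I R by (rule I)
  interpret Q: ring "R Quot I" by (rule I.quotient_is_ring)
  show "N ` C \<noteq> {}" "N ` D \<noteq> {}"
    using ideal.quotient_carrier_nonempty[OF I] C D by auto
  have CD: "\<And>x. x \<in> C \<Longrightarrow> x \<in> carrier R" "\<And>y. y \<in> D \<Longrightarrow> y \<in> carrier R"
    using ideal.quotient_carrier_rep(1)[OF I] C D by blast+
  then show "\<And>a. a \<in> N ` C \<Longrightarrow> 0 \<le> a" "\<And>b. b \<in> N ` D \<Longrightarrow> 0 \<le> b"
    using seminorm_nonneg by blast+
  fix a b assume "a \<in> N ` C" "b \<in> N ` D"
  then obtain x y where xy: "x \<in> C" "y \<in> D" and ab: "a = N x" "b = N y" by blast
  then have "x \<otimes> y \<in> C \<otimes>\<^bsub>R Quot I\<^esub> D"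
    using CD I.a_rcos_self[of "x \<otimes> y"] unfolding FactRing_def rcoset_mult_def by auto
  then have "quot_seminorm N (C \<otimes>\<^bsub>R Quot I\<^esub> D) \<le> N (x \<otimes> y)"
    by (rule quot_seminorm_le[OF Q.m_closed[OF C D]])
  also have "\<dots> \<le> a * b" using ab CD xy by (simp add: seminorm_mult)
  finally show "quot_seminorm N (C \<otimes>\<^bsub>R Quot I\<^esub> D) \<le> a * b" .
qed

lemma quot_seminorm_minus:
  assumes C: "C \<in> carrier (R Quot I)"
  shows "quot_seminorm N (\<ominus>\<^bsub>R Quot I\<^esub> C) \<le> quot_seminorm N C"
proof (rule le_quot_seminorm)
  interpret I: ideal I R by (rule I)
  interpret Q: ring "R Quot I" by (rule I.quotient_is_ring)
  interpret H: ring_hom_ring R "R Quot I" "(+>) I" by (rule ideal.rcos_ring_hom_ring[OF I])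
  show "C \<in> carrier (R Quot I)" by (rule C)
  fix y assume "y \<in> C"
  then have y: "y \<in> carrier R" "C = I +> y" using ideal.quotient_carrier_rep[OF I C] by blast+
  then have "\<ominus>\<^bsub>R Quot I\<^esub> C = I +> (\<ominus> y)" using H.hom_a_inv by simp
  moreover have "\<ominus> y \<in> I +> (\<ominus> y)" using y(1) by (intro I.a_rcos_self a_inv_closed)
  ultimately have "\<ominus> y \<in> \<ominus>\<^bsub>R Quot I\<^esub> C" by simp
  then have "quot_seminorm N (\<ominus>\<^bsub>R Quot I\<^esub> C) \<le> N (\<ominus> y)"
    by (rule quot_seminorm_le[OF Q.a_inv_closed[OF C]])
  also have "\<dots> \<le> N y" by (rule seminorm_minus[OF y(1)])
  finally show "quot_seminorm N (\<ominus>\<^bsub>R Quot I\<^esub> C) \<le> N y" .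
qed

lemma quot_seminorm_ring_seminorm: "ring_seminorm (R Quot I) (quot_seminorm N)"
  by (intro ring_seminorm.intro ideal.quotient_is_ring[OF I] ring_seminorm_axioms.intro
      quot_seminorm_nonneg quot_seminorm_zero quot_seminorm_add quot_seminorm_mult quot_seminorm_minus)

lemma quot_seminorm_mono:
  assumes "ring_seminorm R p" and "\<And>x. x \<in> carrier R \<Longrightarrow> p x \<le> N x"
    and C: "C \<in> carrier (R Quot I)"
  shows "quot_seminorm p C \<le> quot_seminorm N C"
  unfolding quot_seminorm_def[of N]
proof (rule cInf_greatest)
  show "N ` C \<noteq> {}" using ideal.quotient_carrier_nonempty[OF I C] by blast
  fix a assume "a \<in> N ` C"
  then obtain x where "x \<in> C" "a = N x" by blast
  then show "quot_seminorm p C \<le> a"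
    using ring_seminorm.quot_seminorm_le[OF assms(1) I C] assms(2) ideal.quotient_carrier_rep[OF I C]
    by (meson order_trans)
qed

end

end

lemma nonprincipal_le_sequentially:
  assumes "nonprincipal U"
  shows "U \<le> sequentially"
  unfolding le_sequentially
proof
  fix N show "eventually (\<lambda>n. N \<le> n) U"
  proof (induction N)
    case (Suc N)
    have "eventually (\<lambda>n. n \<noteq> N) U" using assms by (simp add: nonprincipal_def)
    with Suc show ?case by eventually_elim auto
  qed simp
qed

section \<open>Infinite sums\<close>

lemma infsum_UN_disjoint:
  fixes F :: "'a \<Rightarrow> 'c::banach"
  assumes sum: "F summable_on S" and sub: "\<And>w. w \<in> W \<Longrightarrow> A w \<subseteq> S"
    and disj: "disjoint_family_on A W"
  shows "(\<lambda>w. infsum F (A w)) summable_on W"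
    and "(\<Sum>\<^sub>\<infinity>w\<in>W. infsum F (A w)) = infsum F (\<Union>w\<in>W. A w)"
proof -
  let ?S = "Sigma W A"
  have inj: "inj_on snd ?S" using disj by (auto simp: inj_on_def disjoint_family_on_def)
  have img: "snd ` ?S = (\<Union>w\<in>W. A w)" by force
  have "F summable_on (\<Union>w\<in>W. A w)"
    by (rule summable_on_subset_banach[OF sum]) (use sub in blast)
  then have "(F \<circ> snd) summable_on ?S"
    using summable_on_reindex[OF inj, of F] img by simp
  then have Sigma: "(\<lambda>(w,x). F x) summable_on ?S"
    by (simp add: case_prod_beta' comp_def)
  show "(\<lambda>w. infsum F (A w)) summable_on W"
    using summable_on_Sigma_banach[OF Sigma] .
  have "(\<Sum>\<^sub>\<infinity>w\<in>W. infsum F (A w)) = infsum (\<lambda>(w,x). F x) ?S"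
    using infsum_Sigma'_banach[OF Sigma] .
  also have "\<dots> = infsum (F \<circ> snd) ?S" by (simp add: case_prod_beta' comp_def)
  also have "\<dots> = infsum F (snd ` ?S)" using infsum_reindex[OF inj, of F] by simp
  finally show "(\<Sum>\<^sub>\<infinity>w\<in>W. infsum F (A w)) = infsum F (\<Union>w\<in>W. A w)" using img by simp
qed

lemma norm_summable_prod:
  fixes F :: "'a \<Rightarrow> 'c::real_normed_div_algebra" and G :: "'b \<Rightarrow> 'c"
  assumes "(\<lambda>x. norm (F x)) summable_on A" "(\<lambda>x. norm (G x)) summable_on B"
  shows "(\<lambda>p. norm ((\<lambda>(a,b). F a * G b) p)) summable_on (A \<times> B)"
    and "infsum (\<lambda>(a,b). norm (F a * G b)) (A \<times> B) = infsum (\<lambda>a. norm (F a)) A * infsum (\<lambda>b. norm (G b)) B"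
proof -
  have eq: "(\<lambda>p. norm ((\<lambda>(a,b). F a * G b) p)) = (\<lambda>(a,b). norm (F a) * norm (G b))"
    by (auto simp: norm_mult)
  have outer: "(\<lambda>a. infsum (\<lambda>b. norm (F a) * norm (G b)) B) = (\<lambda>a. norm (F a) * infsum (\<lambda>b. norm (G b)) B)"
    by (simp add: infsum_cmult_right')
  have so: "(\<lambda>a. norm (F a) * infsum (\<lambda>b. norm (G b)) B) summable_on A"
    using assms(1) by (rule summable_on_cmult_left)
  have ss: "(\<lambda>(a,b). norm (F a) * norm (G b)) summable_on (A \<times> B)"
    by (rule summable_on_SigmaI[where g="\<lambda>a. norm (F a) * infsum (\<lambda>b. norm (G b)) B"])
       (auto intro!: has_sum_cmult_right simp: so assms(2))
  then show "(\<lambda>p. norm ((\<lambda>(a,b). F a * G b) p)) summable_on (A \<times> B)" using eq by simp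
  have "infsum (\<lambda>(a,b). norm (F a) * norm (G b)) (A \<times> B) =
        infsum (\<lambda>a. infsum (\<lambda>b. norm (F a) * norm (G b)) B) A"
    using infsum_Sigma'_banach[of "\<lambda>a b. norm (F a) * norm (G b)" A "\<lambda>_. B"] ss by simp
  also have "\<dots> = infsum (\<lambda>a. norm (F a)) A * infsum (\<lambda>b. norm (G b)) B"
    by (simp add: outer infsum_cmult_left')
  finally show "infsum (\<lambda>(a,b). norm (F a * G b)) (A \<times> B) = infsum (\<lambda>a. norm (F a)) A * infsum (\<lambda>b. norm (G b)) B"
    by (simp add: case_prod_beta' norm_mult)
qed

lemma infsum_mult_infsum:
  fixes a :: "'a \<Rightarrow> 'c::{real_normed_div_algebra, banach}" and b :: "'b \<Rightarrow> 'c"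
  assumes "(\<lambda>x. norm (a x)) summable_on A" "(\<lambda>x. norm (b x)) summable_on B"
  shows "infsum a A * infsum b B = infsum (\<lambda>(x,y). a x * b y) (A \<times> B)"
proof -
  have s: "(\<lambda>(x,y). a x * b y) summable_on (A \<times> B)"
    using abs_summable_summable[OF norm_summable_prod(1)[OF assms]] .
  have "infsum (\<lambda>(x,y). a x * b y) (A \<times> B) = infsum (\<lambda>x. infsum (\<lambda>y. a x * b y) B) A"
    using infsum_Sigma'_banach[of "\<lambda>x y. a x * b y" A "\<lambda>_. B"] s by simp
  also have "\<dots> = infsum (\<lambda>x. a x * infsum b B) A" by (simp add: infsum_cmult_right')
  also have "\<dots> = infsum a A * infsum b B" by (simp add: infsum_cmult_left')
  finally show ?thesis by simp
qed

lemma infsum_Sigma_reindex_bij: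
  fixes F :: "'a \<Rightarrow> 'c::banach"
  assumes "F summable_on T"
    and "\<And>a. a \<in> Sigma A B \<Longrightarrow> i (j a) = a" "\<And>a. a \<in> Sigma A B \<Longrightarrow> j a \<in> T"
    and "\<And>b. b \<in> T \<Longrightarrow> j (i b) = b" "\<And>b. b \<in> T \<Longrightarrow> i b \<in> Sigma A B"
    and "\<And>x y. (x, y) \<in> Sigma A B \<Longrightarrow> F (j (x, y)) = G x y"
  shows "(\<Sum>\<^sub>\<infinity>x\<in>A. \<Sum>\<^sub>\<infinity>y\<in>B x. G x y) = infsum F T"
proof -
  have G: "F (j a) = (\<lambda>(x, y). G x y) a" if "a \<in> Sigma A B" for a
    using that assms(6) by (cases a) simp
  have "(\<lambda>(x, y). G x y) summable_on Sigma A B"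
    using summable_on_reindex_bij_witness[of "Sigma A B" i j T F] assms(1-5) G by blast
  then have "(\<Sum>\<^sub>\<infinity>x\<in>A. \<Sum>\<^sub>\<infinity>y\<in>B x. G x y) = infsum (\<lambda>(x, y). G x y) (Sigma A B)"
    by (rule infsum_Sigma'_banach)
  also have "\<dots> = infsum F T"
    using infsum_reindex_bij_witness[of "Sigma A B" i j T F] assms(1-5) G by blast
  finally show ?thesis .
qed

lemma infsum_single_nonzero:
  assumes "a \<in> A" "\<And>x. x \<in> A \<Longrightarrow> x \<noteq> a \<Longrightarrow> f x = 0"
  shows "infsum f A = f a"
proof -
  have "infsum f A = infsum f {a}" by (rule infsum_cong_neutral) (use assms in auto)
  then show ?thesis by simp
qed

lemma infsum_sum_finite:
  fixes f :: "'b \<Rightarrow> 'a \<Rightarrow> real"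
  assumes "finite F" "\<And>k. k \<in> F \<Longrightarrow> f k summable_on A"
  shows "(\<lambda>j. \<Sum>k\<in>F. f k j) summable_on A \<and> infsum (\<lambda>j. \<Sum>k\<in>F. f k j) A = (\<Sum>k\<in>F. infsum (f k) A)"
  using assms
proof (induction F rule: finite_induct)
  case (insert x F)
  then have "f x summable_on A" "(\<lambda>j. \<Sum>k\<in>F. f k j) summable_on A" by auto
  then show ?case using insert by (simp add: summable_on_add infsum_add)
qed simp

section \<open>\<open>Cu\<^sub>2\<close> acting on \<open>\<nat>\<close> by partial injections\<close>

fun gen_act :: "gen \<Rightarrow> nat \<Rightarrow> nat option" where
  "gen_act S1 k = Some (2*k)"
| "gen_act S2 k = Some (2*k+1)"
| "gen_act S1s k = (if even k then Some (k div 2) else None)"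
| "gen_act S2s k = (if odd k then Some (k div 2) else None)"
| "gen_act Zg k = None"

fun word_act :: "gen list \<Rightarrow> nat \<Rightarrow> nat option" where
  "word_act [] k = Some k"
| "word_act (g # w) k = Option.bind (word_act w k) (gen_act g)"

lemma word_act_append: "word_act (x @ y) k = Option.bind (word_act y k) (word_act x)"
  by (induction x arbitrary: k) (auto split: Option.bind_splits option.splits)

lemma word_act_cong: "cu_cong u v \<Longrightarrow> word_act u = word_act v"
proof (induction rule: cu_cong.induct)
  case (cu_ctxt u v x y)
  then show ?case by (auto simp: word_act_append fun_eq_iff)
qed (auto simp: fun_eq_iff split: Option.bind_splits)

lemma gen_act_inj: "gen_act g k = Some n \<Longrightarrow> gen_act g k' = Some n \<Longrightarrow> k = k'"
  by (cases g) (auto split: if_splits elim!: evenE oddE)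

lemma word_act_inj: "word_act w k = Some n \<Longrightarrow> word_act w k' = Some n \<Longrightarrow> k = k'"
proof (induction w arbitrary: n)
  case (Cons g w)
  then show ?case
    by (auto split: Option.bind_splits dest: gen_act_inj)
qed simp

lemma cu_cls_eq_iff: "cu_cls u = cu_cls v \<longleftrightarrow> cu_cong u v"
  unfolding cu_cls_def by (auto intro: cu_cong.intros)

lemma cu_cls_rep: "cu_cls (cu_rep (cu_cls w)) = cu_cls w"
  unfolding cu_rep_def by (rule someI2[of _ w]) auto

lemma cu_cong_append: "cu_cong a a' \<Longrightarrow> cu_cong b b' \<Longrightarrow> cu_cong (a @ b) (a' @ b')"
proof -
  assume a: "cu_cong a a'" and b: "cu_cong b b'"
  have 1: "cu_cong (a @ b) (a' @ b)" using cu_ctxt[OF a, of "[]" b] by simp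
  have 2: "cu_cong (a' @ b) (a' @ b')" using cu_ctxt[OF b, of a' "[]"] by simp
  show ?thesis using 1 2 by (rule cu_trans)
qed

lemma cu_mult_cls: "cu_mult (cu_cls u) (cu_cls v) = cu_cls (u @ v)"
  unfolding cu_mult_def
  by (simp add: cu_cls_eq_iff) (metis cu_cls_eq_iff cu_cong_append cu_cls_rep)

definition cu_act :: "gen list set \<Rightarrow> nat \<Rightarrow> nat option" where
  "cu_act C = word_act (cu_rep C)"

lemma cu_act_cls: "cu_act (cu_cls w) = word_act w"
  unfolding cu_act_def by (metis cu_cls_eq_iff word_act_cong cu_cls_rep)

lemma Cu2E: "s \<in> Cu2 \<Longrightarrow> (\<And>w. s = cu_cls w \<Longrightarrow> P) \<Longrightarrow> P"
  unfolding Cu2_def by auto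

lemma cu_mult_closed: "cu_mult s t \<in> Cu2"
  unfolding cu_mult_def Cu2_def by auto

lemma cu_mult_assoc: "s \<in> Cu2 \<Longrightarrow> t \<in> Cu2 \<Longrightarrow> r \<in> Cu2 \<Longrightarrow>
   cu_mult (cu_mult s t) r = cu_mult s (cu_mult t r)"
  by (auto elim!: Cu2E simp: cu_mult_cls)

lemma cu_act_mult: "s \<in> Cu2 \<Longrightarrow> t \<in> Cu2 \<Longrightarrow> cu_act (cu_mult s t) k = Option.bind (cu_act t k) (cu_act s)"
  by (auto elim!: Cu2E simp: cu_mult_cls cu_act_cls word_act_append)

lemma cu_act_inj: "cu_act s k = Some n \<Longrightarrow> cu_act s k' = Some n \<Longrightarrow> k = k'"
  unfolding cu_act_def using word_act_inj by blast

lemma cu_act_zero: "cu_act cu_zero k = None"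
  unfolding cu_zero_def by (simp add: cu_act_cls)

lemma Cu2nz_if_act: "s \<in> Cu2 \<Longrightarrow> cu_act s k = Some n \<Longrightarrow> s \<in> Cu2nz"
  unfolding Cu2nz_def using cu_act_zero by auto

lemma cu_cls_in_Cu2: "cu_cls w \<in> Cu2"
  unfolding Cu2_def by auto

lemma cu_e_in_Cu2nz: "cu_e \<in> Cu2nz"
  unfolding cu_e_def by (rule Cu2nz_if_act[of _ 0 0]) (auto simp: cu_cls_in_Cu2 cu_act_cls)

lemma cu_act_e: "cu_act cu_e k = Some k"
  by (simp add: cu_e_def cu_act_cls)

lemma cu_mult_e_left: "s \<in> Cu2 \<Longrightarrow> cu_mult cu_e s = s"
  by (auto elim!: Cu2E simp: cu_e_def cu_mult_cls)

lemma cu_mult_e_right: "s \<in> Cu2 \<Longrightarrow> cu_mult s cu_e = s"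
  by (auto elim!: Cu2E simp: cu_e_def cu_mult_cls)

lemma cu_cong_Zg_left: "cu_cong (Zg # u) [Zg]"
proof (induction u rule: rev_induct)
  case (snoc x xs)
  have "cu_cong ((Zg # xs) @ [x]) ([Zg] @ [x])"
    using cu_cong_append[OF snoc cu_refl] .
  moreover have "cu_cong [Zg, x] [Zg]" by (rule cu_zl)
  ultimately show ?case by (auto intro: cu_trans)
qed (rule cu_refl)

lemma cu_cong_Zg_right: "cu_cong (u @ [Zg]) [Zg]"
proof (induction u)
  case (Cons x xs)
  have "cu_cong ([x] @ (xs @ [Zg])) ([x] @ [Zg])"
    using cu_cong_append[OF cu_refl Cons] .
  moreover have "cu_cong [x, Zg] [Zg]" by (rule cu_zr)
  ultimately show ?case by (auto intro: cu_trans)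
qed (simp add: cu_refl)

lemma cu_mult_zero_left: "s \<in> Cu2 \<Longrightarrow> cu_mult cu_zero s = cu_zero"
  by (elim Cu2E) (simp add: cu_zero_def cu_mult_cls cu_cls_eq_iff cu_cong_Zg_left)

lemma cu_mult_zero_right: "s \<in> Cu2 \<Longrightarrow> cu_mult s cu_zero = cu_zero"
  by (elim Cu2E) (simp add: cu_zero_def cu_mult_cls cu_cls_eq_iff cu_cong_Zg_right)

lemma Cu2nz_Cu2: "s \<in> Cu2nz \<Longrightarrow> s \<in> Cu2"
  unfolding Cu2nz_def by auto

lemma Cu2nz_mult_factors: "s \<in> Cu2 \<Longrightarrow> t \<in> Cu2 \<Longrightarrow> cu_mult s t \<in> Cu2nz \<Longrightarrow> s \<in> Cu2nz \<and> t \<in> Cu2nz"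
  unfolding Cu2nz_def using cu_mult_zero_left cu_mult_zero_right by auto

lemma word_act_even_proj: "word_act [S1, S1s] k = (if even k then Some k else None)"
  by auto

lemma word_act_odd_proj: "word_act [S2, S2s] k = (if odd k then Some k else None)"
  by (auto elim: oddE)

lemma even_proj_in_Cu2nz: "cu_cls [S1, S1s] \<in> Cu2nz"
  by (rule Cu2nz_if_act[of _ 0 0]) (auto simp: cu_cls_in_Cu2 cu_act_cls)

lemma odd_proj_in_Cu2nz: "cu_cls [S2, S2s] \<in> Cu2nz"
  by (rule Cu2nz_if_act[of _ 1 1]) (auto simp: cu_cls_in_Cu2 cu_act_cls)

section \<open>The convolution algebra\<close>

lemma l1_vanishes: "f \<in> l1 \<Longrightarrow> s \<notin> Cu2nz \<Longrightarrow> f s = 0"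
  unfolding l1_def by auto

lemma l1_norm_summable: "f \<in> l1 \<Longrightarrow> (\<lambda>x. norm (f x)) summable_on Cu2nz"
  unfolding l1_def by auto

lemma l1_summable_on: "f \<in> l1 \<Longrightarrow> B \<subseteq> Cu2nz \<Longrightarrow> f summable_on B"
  using abs_summable_summable l1_norm_summable summable_on_subset_banach by blast

lemma l1_norm_summable_on: "f \<in> l1 \<Longrightarrow> B \<subseteq> Cu2nz \<Longrightarrow> (\<lambda>x. norm (f x)) summable_on B"
  using l1_norm_summable summable_on_subset_banach by blast

lemma l1I: "(\<And>s. s \<notin> Cu2nz \<Longrightarrow> f s = 0) \<Longrightarrow> (\<lambda>x. norm (f x)) summable_on Cu2nz \<Longrightarrow> f \<in> l1"
  unfolding l1_def by auto

lemma l1_add: "f \<in> l1 \<Longrightarrow> g \<in> l1 \<Longrightarrow> (\<lambda>s. f s + g s) \<in> l1"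
proof (rule l1I)
  assume f: "f \<in> l1" and g: "g \<in> l1"
  show "f s + g s = 0" if "s \<notin> Cu2nz" for s using that f g by (simp add: l1_vanishes)
  have "(\<lambda>s. norm (f s) + norm (g s)) summable_on Cu2nz"
    using l1_norm_summable[OF f] l1_norm_summable[OF g] by (rule summable_on_add)
  then show "(\<lambda>s. norm (f s + g s)) summable_on Cu2nz"
    by (rule summable_on_comparison_test) (auto simp: norm_triangle_ineq)
qed

lemma l1_neg: "f \<in> l1 \<Longrightarrow> (\<lambda>s. - f s) \<in> l1"
  by (rule l1I) (auto simp: l1_vanishes l1_norm_summable)

lemma l1_diff: "f \<in> l1 \<Longrightarrow> g \<in> l1 \<Longrightarrow> (\<lambda>s. f s - g s) \<in> l1"
  using l1_add[of f "\<lambda>s. - g s"] l1_neg[of g] by simp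

lemma l1_zero: "(\<lambda>_. 0) \<in> l1"
  by (rule l1I) auto

lemma delta_l1: "c \<in> Cu2nz \<Longrightarrow> delta c \<in> l1"
  by (rule l1I) (auto simp: delta_def split: if_split_asm intro!: finite_nonzero_values_imp_summable_on finite_subset[of _ "{c}"])

lemma l1norm_nonneg: "l1norm f \<ge> 0"
  unfolding l1norm_def by (simp add: infsum_nonneg)

lemma l1norm_zero: "l1norm (\<lambda>_. 0) = 0"
  by (simp add: l1norm_def)

lemma l1norm_add:
  assumes f: "f \<in> l1" and g: "g \<in> l1"
  shows "l1norm (\<lambda>s. f s + g s) \<le> l1norm f + l1norm g"
proof -
  have "l1norm (\<lambda>s. f s + g s) \<le> (\<Sum>\<^sub>\<infinity>s\<in>Cu2nz. norm (f s) + norm (g s))"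
    unfolding l1norm_def
    by (rule infsum_mono[OF l1_norm_summable[OF l1_add[OF f g]]
          summable_on_add[OF l1_norm_summable[OF f] l1_norm_summable[OF g]]])
       (simp add: norm_triangle_ineq)
  also have "\<dots> = l1norm f + l1norm g"
    unfolding l1norm_def by (rule infsum_add[OF l1_norm_summable[OF f] l1_norm_summable[OF g]])
  finally show ?thesis .
qed

lemma l1_prod_norm_summable: "f \<in> l1 \<Longrightarrow> g \<in> l1 \<Longrightarrow> (\<lambda>p. norm ((\<lambda>(s,t). f s * g t) p)) summable_on (Cu2nz \<times> Cu2nz)"
  using norm_summable_prod(1) l1_norm_summable by blast

lemma l1_prod_norm_infsum: "f \<in> l1 \<Longrightarrow> g \<in> l1 \<Longrightarrow>
   infsum (\<lambda>(s,t). norm (f s * g t)) (Cu2nz \<times> Cu2nz) = l1norm f * l1norm g"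
  using norm_summable_prod(2) l1_norm_summable unfolding l1norm_def by blast

definition factorizations :: "gen list set \<Rightarrow> (gen list set \<times> gen list set) set" where
  "factorizations w = {(s,t). s \<in> Cu2nz \<and> t \<in> Cu2nz \<and> cu_mult s t = w}"

lemma factorizations_subset: "factorizations w \<subseteq> Cu2nz \<times> Cu2nz" unfolding factorizations_def by auto

lemma disjoint_family_factorizations: "disjoint_family_on factorizations W"
  unfolding disjoint_family_on_def factorizations_def by auto

lemma conv_Cu2nz: "w \<in> Cu2nz \<Longrightarrow> conv f g w = infsum (\<lambda>(s,t). f s * g t) (factorizations w)"
  unfolding conv_def factorizations_def by simp

lemma conv_not_Cu2nz: "w \<notin> Cu2nz \<Longrightarrow> conv f g w = 0"
  unfolding conv_def by simp

lemma conv_l1: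
  assumes f: "f \<in> l1" and g: "g \<in> l1"
  shows "conv f g \<in> l1" and "l1norm (conv f g) \<le> l1norm f * l1norm g"
proof -
  let ?N = "\<lambda>(s,t). norm (f s * g t)"
  have sN: "?N summable_on (Cu2nz \<times> Cu2nz)" using l1_prod_norm_summable[OF f g] by (simp add: case_prod_beta')
  note partition = infsum_UN_disjoint[OF sN factorizations_subset disjoint_family_factorizations]
  have ps: "(\<lambda>w. infsum ?N (factorizations w)) summable_on Cu2nz"
    and pv: "(\<Sum>\<^sub>\<infinity>w\<in>Cu2nz. infsum ?N (factorizations w)) = infsum ?N (\<Union>w\<in>Cu2nz. factorizations w)"
    by (rule partition(1), rule partition(2))
  have bnd: "norm (conv f g w) \<le> infsum ?N (factorizations w)" if "w \<in> Cu2nz" for w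
  proof -
    have "(\<lambda>p. norm ((\<lambda>(s,t). f s * g t) p)) summable_on factorizations w"
      using l1_prod_norm_summable[OF f g] factorizations_subset summable_on_subset_banach by blast
    moreover have e: "(\<lambda>x. norm ((\<lambda>(s,t). f s * g t) x)) = ?N" by (simp add: fun_eq_iff case_prod_beta')
    ultimately show ?thesis using norm_infsum_bound[of "\<lambda>(s,t). f s * g t" "factorizations w"] conv_Cu2nz[OF that] by simp
  qed
  have cs: "(\<lambda>w. norm (conv f g w)) summable_on Cu2nz"
    by (rule summable_on_comparison_test[OF ps]) (auto simp: bnd)
  show "conv f g \<in> l1" by (rule l1I) (auto simp: conv_not_Cu2nz cs)
  have "l1norm (conv f g) \<le> (\<Sum>\<^sub>\<infinity>w\<in>Cu2nz. infsum ?N (factorizations w))"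
    unfolding l1norm_def by (rule infsum_mono[OF cs ps]) (simp add: bnd)
  also have "\<dots> \<le> infsum ?N (Cu2nz \<times> Cu2nz)"
  proof -
    have sub: "(\<Union>w\<in>Cu2nz. factorizations w) \<subseteq> Cu2nz \<times> Cu2nz" using factorizations_subset by blast
    show ?thesis unfolding pv
      by (rule infsum_mono_neutral[OF summable_on_subset_banach[OF sN sub] sN]) (use sub in auto)
  qed
  also have "\<dots> = l1norm f * l1norm g" using l1_prod_norm_infsum[OF f g] by (simp add: case_prod_beta')
  finally show "l1norm (conv f g) \<le> l1norm f * l1norm g" .
qed

definition triple_prod :: "l1elt \<Rightarrow> l1elt \<Rightarrow> l1elt \<Rightarrow> gen list set \<times> gen list set \<times> gen list set \<Rightarrow> complex" where
  "triple_prod f g h = (\<lambda>(s, t, r). f s * g t * h r)"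

lemma triple_prod_summable:
  assumes f: "f \<in> l1" and g: "g \<in> l1" and h: "h \<in> l1"
  shows "triple_prod f g h summable_on (Cu2nz \<times> (Cu2nz \<times> Cu2nz))"
proof -
  have "(\<lambda>p. norm ((\<lambda>(a,b). f a * (\<lambda>(t,r). g t * h r) b) p)) summable_on (Cu2nz \<times> (Cu2nz \<times> Cu2nz))"
    by (rule norm_summable_prod(1)[OF l1_norm_summable[OF f] l1_prod_norm_summable[OF g h]])
  then have "(\<lambda>p. norm (triple_prod f g h p)) summable_on (Cu2nz \<times> (Cu2nz \<times> Cu2nz))"
    unfolding triple_prod_def by (simp add: case_prod_beta' mult.assoc)
  then show ?thesis by (rule abs_summable_summable)
qed

lemma conv_conv_left_eq:
  assumes f: "f \<in> l1" and g: "g \<in> l1" and h: "h \<in> l1" and w: "w \<in> Cu2nz"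
  shows "conv (conv f g) h w = infsum (triple_prod f g h)
    {(s, t, r). s \<in> Cu2nz \<and> t \<in> Cu2nz \<and> r \<in> Cu2nz \<and> cu_mult (cu_mult s t) r = w}"
proof -
  have inner: "cu_mult s t \<in> Cu2nz" if "r \<in> Cu2nz" "cu_mult (cu_mult s t) r = w" for s t r
    using Cu2nz_mult_factors[OF cu_mult_closed Cu2nz_Cu2[OF that(1)]] that(2) w by auto
  have "conv (conv f g) h w
      = (\<Sum>\<^sub>\<infinity>x\<in>factorizations w. \<Sum>\<^sub>\<infinity>y\<in>factorizations (fst x). f (fst y) * g (snd y) * h (snd x))"
    unfolding conv_Cu2nz[OF w]
    by (rule infsum_cong)
       (auto simp: factorizations_def conv_Cu2nz infsum_cmult_left'[symmetric] case_prod_beta')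
  also have "\<dots> = infsum (triple_prod f g h)
      {(s, t, r). s \<in> Cu2nz \<and> t \<in> Cu2nz \<and> r \<in> Cu2nz \<and> cu_mult (cu_mult s t) r = w}"
    by (rule infsum_Sigma_reindex_bij[where j="\<lambda>((u, r), (s, t)). (s, t, r)"
          and i="\<lambda>(s, t, r). ((cu_mult s t, r), (s, t))"],
        rule summable_on_subset_banach[OF triple_prod_summable[OF f g h]])
       (use inner in \<open>auto simp: factorizations_def triple_prod_def\<close>)
  finally show ?thesis .
qed

lemma conv_conv_right_eq:
  assumes f: "f \<in> l1" and g: "g \<in> l1" and h: "h \<in> l1" and w: "w \<in> Cu2nz"
  shows "conv f (conv g h) w = infsum (triple_prod f g h)
    {(s, t, r). s \<in> Cu2nz \<and> t \<in> Cu2nz \<and> r \<in> Cu2nz \<and> cu_mult s (cu_mult t r) = w}"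
proof -
  have inner: "cu_mult t r \<in> Cu2nz" if "s \<in> Cu2nz" "cu_mult s (cu_mult t r) = w" for s t r
    using Cu2nz_mult_factors[OF Cu2nz_Cu2[OF that(1)] cu_mult_closed] that(2) w by auto
  have "conv f (conv g h) w
      = (\<Sum>\<^sub>\<infinity>x\<in>factorizations w. \<Sum>\<^sub>\<infinity>y\<in>factorizations (snd x). f (fst x) * g (fst y) * h (snd y))"
    unfolding conv_Cu2nz[OF w]
    by (rule infsum_cong)
       (auto simp: factorizations_def conv_Cu2nz infsum_cmult_right'[symmetric] case_prod_beta' mult.assoc)
  also have "\<dots> = infsum (triple_prod f g h)
      {(s, t, r). s \<in> Cu2nz \<and> t \<in> Cu2nz \<and> r \<in> Cu2nz \<and> cu_mult s (cu_mult t r) = w}"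
    by (rule infsum_Sigma_reindex_bij[where j="\<lambda>((s, v), (t, r)). (s, t, r)"
          and i="\<lambda>(s, t, r). ((s, cu_mult t r), (t, r))"],
        rule summable_on_subset_banach[OF triple_prod_summable[OF f g h]])
       (use inner in \<open>auto simp: factorizations_def triple_prod_def\<close>)
  finally show ?thesis .
qed

lemma conv_assoc:
  assumes f: "f \<in> l1" and g: "g \<in> l1" and h: "h \<in> l1"
  shows "conv (conv f g) h = conv f (conv g h)"
proof
  fix w show "conv (conv f g) h w = conv f (conv g h) w"
  proof (cases "w \<in> Cu2nz")
    case True
    have "{(s,(t,r)). s \<in> Cu2nz \<and> t \<in> Cu2nz \<and> r \<in> Cu2nz \<and> cu_mult (cu_mult s t) r = w} =
          {(s,(t,r)). s \<in> Cu2nz \<and> t \<in> Cu2nz \<and> r \<in> Cu2nz \<and> cu_mult s (cu_mult t r) = w}"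
      by (auto simp: cu_mult_assoc Cu2nz_Cu2)
    then show ?thesis using conv_conv_left_eq[OF f g h True] conv_conv_right_eq[OF f g h True] by simp
  qed (simp add: conv_not_Cu2nz)
qed

lemma conv_unit_left: assumes f: "f \<in> l1" shows "conv (delta cu_e) f = f"
proof
  fix w show "conv (delta cu_e) f w = f w"
  proof (cases "w \<in> Cu2nz")
    case True
    have "conv (delta cu_e) f w = (\<lambda>(s,t). delta cu_e s * f t) (cu_e, w)"
      unfolding conv_Cu2nz[OF True]
      by (rule infsum_single_nonzero) (auto simp: factorizations_def cu_e_in_Cu2nz True delta_def cu_mult_e_left Cu2nz_Cu2 split: if_split_asm)
    then show ?thesis by (simp add: delta_def)
  qed (simp add: conv_not_Cu2nz l1_vanishes f)
qed

lemma conv_unit_right: assumes f: "f \<in> l1" shows "conv f (delta cu_e) = f"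
proof
  fix w show "conv f (delta cu_e) w = f w"
  proof (cases "w \<in> Cu2nz")
    case True
    have "conv f (delta cu_e) w = (\<lambda>(s,t). f s * delta cu_e t) (w, cu_e)"
      unfolding conv_Cu2nz[OF True]
      by (rule infsum_single_nonzero) (auto simp: factorizations_def cu_e_in_Cu2nz True delta_def cu_mult_e_right Cu2nz_Cu2 split: if_split_asm)
    then show ?thesis by (simp add: delta_def)
  qed (simp add: conv_not_Cu2nz l1_vanishes f)
qed

lemma conv_add_left:
  assumes f: "f \<in> l1" and g: "g \<in> l1" and h: "h \<in> l1"
  shows "conv (\<lambda>s. f s + g s) h = (\<lambda>s. conv f h s + conv g h s)"
proof
  fix w show "conv (\<lambda>s. f s + g s) h w = conv f h w + conv g h w"
  proof (cases "w \<in> Cu2nz")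
    case True
    have s1: "(\<lambda>(s,t). f s * h t) summable_on factorizations w"
      using abs_summable_summable[OF l1_prod_norm_summable[OF f h]] factorizations_subset summable_on_subset_banach by blast
    have s2: "(\<lambda>(s,t). g s * h t) summable_on factorizations w"
      using abs_summable_summable[OF l1_prod_norm_summable[OF g h]] factorizations_subset summable_on_subset_banach by blast
    have "conv (\<lambda>s. f s + g s) h w = infsum (\<lambda>p. (\<lambda>(s,t). f s * h t) p + (\<lambda>(s,t). g s * h t) p) (factorizations w)"
      unfolding conv_Cu2nz[OF True] by (rule infsum_cong) (auto simp: distrib_right)
    also have "\<dots> = conv f h w + conv g h w"
      unfolding conv_Cu2nz[OF True] by (rule infsum_add[OF s1 s2])
    finally show ?thesis .
  qed (simp add: conv_not_Cu2nz)
qed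

lemma conv_add_right:
  assumes f: "f \<in> l1" and g: "g \<in> l1" and h: "h \<in> l1"
  shows "conv h (\<lambda>s. f s + g s) = (\<lambda>s. conv h f s + conv h g s)"
proof
  fix w show "conv h (\<lambda>s. f s + g s) w = conv h f w + conv h g w"
  proof (cases "w \<in> Cu2nz")
    case True
    have s1: "(\<lambda>(s,t). h s * f t) summable_on factorizations w"
      using abs_summable_summable[OF l1_prod_norm_summable[OF h f]] factorizations_subset summable_on_subset_banach by blast
    have s2: "(\<lambda>(s,t). h s * g t) summable_on factorizations w"
      using abs_summable_summable[OF l1_prod_norm_summable[OF h g]] factorizations_subset summable_on_subset_banach by blast
    have "conv h (\<lambda>s. f s + g s) w = infsum (\<lambda>p. (\<lambda>(s,t). h s * f t) p + (\<lambda>(s,t). h s * g t) p) (factorizations w)"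
      unfolding conv_Cu2nz[OF True] by (rule infsum_cong) (auto simp: distrib_left)
    also have "\<dots> = conv h f w + conv h g w"
      unfolding conv_Cu2nz[OF True] by (rule infsum_add[OF s1 s2])
    finally show ?thesis .
  qed (simp add: conv_not_Cu2nz)
qed

lemma A_ring_simps: "carrier A_ring = l1" "mult A_ring = conv" "one A_ring = delta cu_e"
  "zero A_ring = (\<lambda>_. 0)" "add A_ring = (\<lambda>f g s. f s + g s)"
  unfolding A_ring_def by simp_all

lemma ring_A_ring: "ring A_ring"
proof (rule ringI)
  show "abelian_group A_ring"
    by (rule abelian_groupI)
       (auto simp: A_ring_simps l1_add l1_zero add.assoc add.commute intro!: bexI[of _ "\<lambda>s. - _ s"] l1_neg)
  show "monoid A_ring"
    by (rule monoidI)
       (auto simp: A_ring_simps conv_l1 delta_l1 cu_e_in_Cu2nz conv_assoc conv_unit_left conv_unit_right)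
qed (auto simp: A_ring_simps conv_add_left conv_add_right)

lemma A_ring_minus:
  assumes "f \<in> l1" shows "\<ominus>\<^bsub>A_ring\<^esub> f = (\<lambda>s. - f s)"
proof -
  interpret ring A_ring by (rule ring_A_ring)
  show ?thesis using assms by (intro minus_equality) (auto simp: A_ring_simps l1_neg)
qed

lemma ring_seminorm_l1norm: "ring_seminorm A_ring l1norm"
proof (rule ring_seminorm.intro[OF ring_A_ring], rule ring_seminorm_axioms.intro)
  fix f g assume f: "f \<in> carrier A_ring" and g: "g \<in> carrier A_ring"
  then show "l1norm (f \<oplus>\<^bsub>A_ring\<^esub> g) \<le> l1norm f + l1norm g"
    and "l1norm (f \<otimes>\<^bsub>A_ring\<^esub> g) \<le> l1norm f * l1norm g"
    by (simp_all add: A_ring_simps l1norm_add conv_l1)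
  show "l1norm (\<ominus>\<^bsub>A_ring\<^esub> f) \<le> l1norm f"
    using f by (simp add: A_ring_simps A_ring_minus l1norm_def)
qed (simp_all add: A_ring_simps l1norm_nonneg l1norm_zero)

section \<open>Matrix coefficients and the row norm\<close>

definition act_fiber :: "nat \<Rightarrow> nat \<Rightarrow> gen list set set" where
  "act_fiber k n = {s \<in> Cu2nz. cu_act s k = Some n}"

text \<open>\<open>act_coeff y n k\<close> is the \<open>(n, k)\<close> matrix entry of \<open>y\<close> acting on sequences indexed by
  \<open>\<nat>\<close>: the total weight that \<open>y\<close> puts on the elements of \<open>Cu\<^sub>2\<close> mapping \<open>k\<close> to \<open>n\<close>.\<close>

definition act_coeff :: "l1elt \<Rightarrow> nat \<Rightarrow> nat \<Rightarrow> complex" where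
  "act_coeff y n k = infsum y (act_fiber k n)"

lemma act_fiber_subset: "act_fiber k n \<subseteq> Cu2nz" unfolding act_fiber_def by auto

lemma act_coeff_add: assumes f: "f \<in> l1" and g: "g \<in> l1" shows "act_coeff (\<lambda>s. f s + g s) n k = act_coeff f n k + act_coeff g n k"
  unfolding act_coeff_def using l1_summable_on[OF f act_fiber_subset] l1_summable_on[OF g act_fiber_subset] by (rule infsum_add)

lemma act_coeff_minus: "act_coeff (\<lambda>s. - f s) n k = - act_coeff f n k"
  unfolding act_coeff_def by (rule infsum_uminus)

lemma act_coeff_diff: "f \<in> l1 \<Longrightarrow> g \<in> l1 \<Longrightarrow> act_coeff (\<lambda>s. f s - g s) n k = act_coeff f n k - act_coeff g n k"
  using act_coeff_add[of f "\<lambda>s. - g s" n k] l1_neg[of g] act_coeff_minus[of g n k] by simp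

lemma sum_norm_infsum_le_l1norm:
  assumes y: "y \<in> l1" and fin: "finite W" and sub: "\<And>w. w \<in> W \<Longrightarrow> A w \<subseteq> Cu2nz"
    and disj: "disjoint_family_on A W"
  shows "(\<Sum>w\<in>W. norm (infsum y (A w))) \<le> l1norm y"
proof -
  have ya: "(\<lambda>s. norm (y s)) summable_on Cu2nz" by (rule l1_norm_summable[OF y])
  have "(\<Sum>w\<in>W. norm (infsum y (A w))) \<le> (\<Sum>w\<in>W. infsum (\<lambda>s. norm (y s)) (A w))"
  proof (rule sum_mono)
    fix w assume "w \<in> W"
    then have "(\<lambda>s. norm (y s)) summable_on A w" using sub summable_on_subset_banach[OF ya] by blast
    then show "norm (infsum y (A w)) \<le> infsum (\<lambda>s. norm (y s)) (A w)" by (rule norm_infsum_bound)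
  qed
  also have "\<dots> = (\<Sum>\<^sub>\<infinity>w\<in>W. infsum (\<lambda>s. norm (y s)) (A w))" using fin by simp
  also have "\<dots> = infsum (\<lambda>s. norm (y s)) (\<Union>w\<in>W. A w)"
    by (rule infsum_UN_disjoint(2)[OF ya sub disj])
  also have "\<dots> \<le> l1norm y" unfolding l1norm_def
    by (rule infsum_mono_neutral) (use sub in \<open>auto intro: summable_on_subset_banach[OF ya] ya\<close>)
  finally show ?thesis .
qed

lemma norm_act_coeff_le: "y \<in> l1 \<Longrightarrow> norm (act_coeff y n k) \<le> l1norm y"
  using sum_norm_infsum_le_l1norm[of y "{0::nat}" "\<lambda>_. act_fiber k n"] act_fiber_subset
  unfolding act_coeff_def by (auto simp: disjoint_family_on_def)

lemma column_sum_le_l1norm: "y \<in> l1 \<Longrightarrow> finite F \<Longrightarrow> (\<Sum>n\<in>F. norm (act_coeff y n k)) \<le> l1norm y"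
  unfolding act_coeff_def
  by (rule sum_norm_infsum_le_l1norm) (auto simp: act_fiber_def disjoint_family_on_def)

lemma row_sum_le_l1norm: "y \<in> l1 \<Longrightarrow> finite F \<Longrightarrow> (\<Sum>k\<in>F. norm (act_coeff y n k)) \<le> l1norm y"
  unfolding act_coeff_def
  by (rule sum_norm_infsum_le_l1norm) (auto simp: act_fiber_def disjoint_family_on_def dest: cu_act_inj)

lemma factorizations_act_fiber:
  "(\<Union>w\<in>act_fiber k n. factorizations w) = (\<Union>j. act_fiber j n \<times> act_fiber k j)"
proof (intro equalityI subsetI)
  fix p assume "p \<in> (\<Union>w\<in>act_fiber k n. factorizations w)"
  then obtain s t where p: "p = (s,t)" "s \<in> Cu2nz" "t \<in> Cu2nz" "cu_act (cu_mult s t) k = Some n"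
    by (auto simp: factorizations_def act_fiber_def)
  then have "Option.bind (cu_act t k) (cu_act s) = Some n" using cu_act_mult Cu2nz_Cu2 by metis
  then obtain j where "cu_act t k = Some j" "cu_act s j = Some n" by (auto split: Option.bind_splits)
  then show "p \<in> (\<Union>j. act_fiber j n \<times> act_fiber k j)" using p by (auto simp: act_fiber_def)
next
  fix p assume "p \<in> (\<Union>j. act_fiber j n \<times> act_fiber k j)"
  then obtain s t j where p: "p = (s,t)" "s \<in> Cu2nz" "t \<in> Cu2nz" "cu_act t k = Some j" "cu_act s j = Some n"
    by (auto simp: act_fiber_def)
  then have c: "cu_act (cu_mult s t) k = Some n" using cu_act_mult Cu2nz_Cu2 by simp
  then have "cu_mult s t \<in> Cu2nz" using Cu2nz_if_act cu_mult_closed by blast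
  then show "p \<in> (\<Union>w\<in>act_fiber k n. factorizations w)" using p c by (auto simp: factorizations_def act_fiber_def)
qed

lemma act_coeff_conv:
  assumes f: "f \<in> l1" and g: "g \<in> l1"
  shows "(\<lambda>j. act_coeff f n j * act_coeff g j k) summable_on UNIV"
    and "act_coeff (conv f g) n k = (\<Sum>\<^sub>\<infinity>j. act_coeff f n j * act_coeff g j k)"
proof -
  let ?F = "\<lambda>(s,t). f s * g t"
  have sF: "?F summable_on (Cu2nz \<times> Cu2nz)" using abs_summable_summable[OF l1_prod_norm_summable[OF f g]] .
  have disj: "disjoint_family_on (\<lambda>j. act_fiber j n \<times> act_fiber k j) UNIV"
    by (auto simp: disjoint_family_on_def act_fiber_def)
  note by_middle = infsum_UN_disjoint[OF sF _ disj] and by_product = infsum_UN_disjoint[OF sF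
      factorizations_subset disjoint_family_factorizations]
  have prod: "act_coeff f n j * act_coeff g j k = infsum ?F (act_fiber j n \<times> act_fiber k j)" for j
    unfolding act_coeff_def
    by (rule infsum_mult_infsum[OF l1_norm_summable_on[OF f act_fiber_subset] l1_norm_summable_on[OF g act_fiber_subset]])
  show "(\<lambda>j. act_coeff f n j * act_coeff g j k) summable_on UNIV"
    unfolding prod by (rule by_middle(1)) (use act_fiber_subset in blast)
  have "act_coeff (conv f g) n k = infsum (\<lambda>w. infsum ?F (factorizations w)) (act_fiber k n)"
    unfolding act_coeff_def by (rule infsum_cong) (auto simp: act_fiber_def conv_Cu2nz)
  also have "\<dots> = infsum ?F (\<Union>j. act_fiber j n \<times> act_fiber k j)"
    unfolding by_product(2) factorizations_act_fiber ..
  also have "\<dots> = (\<Sum>\<^sub>\<infinity>j. infsum ?F (act_fiber j n \<times> act_fiber k j))"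
    by (rule by_middle(2)[symmetric]) (use act_fiber_subset in blast)
  finally show "act_coeff (conv f g) n k = (\<Sum>\<^sub>\<infinity>j. act_coeff f n j * act_coeff g j k)" unfolding prod .
qed

lemma act_coeff_delta: "c \<in> Cu2nz \<Longrightarrow> act_coeff (delta c) n k = (if cu_act c k = Some n then 1 else 0)"
proof (cases "cu_act c k = Some n")
  case True
  assume c: "c \<in> Cu2nz"
  have "act_coeff (delta c) n k = delta c c" unfolding act_coeff_def
    by (rule infsum_single_nonzero) (auto simp: act_fiber_def c True delta_def)
  then show ?thesis using True by (simp add: delta_def)
next
  case False
  have "act_coeff (delta c) n k = 0" unfolding act_coeff_def
    by (rule infsum_0) (use False in \<open>auto simp: act_fiber_def delta_def\<close>)
  then show ?thesis using False by simp
qed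

definition act_kernel :: "l1elt set" where
  "act_kernel = {y \<in> l1. \<forall>n k. act_coeff y n k = 0}"

lemma act_kernel_ideal: "ideal act_kernel A_ring"
proof (rule ring.idealI_absorbing[OF ring_A_ring])
  show "act_kernel \<subseteq> carrier A_ring" by (auto simp: act_kernel_def A_ring_simps)
  show "\<zero>\<^bsub>A_ring\<^esub> \<in> act_kernel" by (auto simp: act_kernel_def A_ring_simps l1_zero act_coeff_def)
  show "a \<oplus>\<^bsub>A_ring\<^esub> b \<in> act_kernel" if "a \<in> act_kernel" "b \<in> act_kernel" for a b
    using that by (auto simp: act_kernel_def A_ring_simps l1_add act_coeff_add)
  show "x \<otimes>\<^bsub>A_ring\<^esub> a \<in> act_kernel" if "a \<in> act_kernel" "x \<in> carrier A_ring" for a x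
    using that by (auto simp: act_kernel_def A_ring_simps conv_l1 act_coeff_conv)
  show "a \<otimes>\<^bsub>A_ring\<^esub> x \<in> act_kernel" if "a \<in> act_kernel" "x \<in> carrier A_ring" for a x
    using that by (auto simp: act_kernel_def A_ring_simps conv_l1 act_coeff_conv)
qed

lemma act_kernel_closed: "l1_closed act_kernel"
  unfolding l1_closed_def
proof (intro allI impI, elim conjE)
  fix X x assume X: "\<forall>n. X n \<in> act_kernel" and x: "x \<in> l1"
    and lim: "(\<lambda>n. l1norm (\<lambda>s. X n s - x s)) \<longlonglongrightarrow> 0"
  have "act_coeff x n k = 0" for n k
  proof -
    have "norm (act_coeff x n k) \<le> l1norm (\<lambda>s. X i s - x s)" for i
    proof -
      have Xi: "X i \<in> l1" "\<forall>n k. act_coeff (X i) n k = 0" using X by (auto simp: act_kernel_def)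
      have "norm (act_coeff x n k) = norm (act_coeff (\<lambda>s. X i s - x s) n k)"
        using act_coeff_diff[OF Xi(1) x] Xi(2) by simp
      also have "\<dots> \<le> l1norm (\<lambda>s. X i s - x s)" by (rule norm_act_coeff_le[OF l1_diff[OF Xi(1) x]])
      finally show ?thesis .
    qed
    then have "norm (act_coeff x n k) \<le> 0" using LIMSEQ_le_const[OF lim] by blast
    then show ?thesis by simp
  qed
  then show "x \<in> act_kernel" using x by (simp add: act_kernel_def)
qed

lemma f0_l1: "f0 \<in> l1"
  unfolding f0_def by (intro l1_diff delta_l1 cu_e_in_Cu2nz even_proj_in_Cu2nz odd_proj_in_Cu2nz)

lemma f0_in_act_kernel: "f0 \<in> act_kernel"
proof -
  have "act_coeff f0 n k = 0" for n k
  proof -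
    have "act_coeff f0 n k = act_coeff (delta cu_e) n k - act_coeff (delta (cu_cls [S1, S1s])) n k - act_coeff (delta (cu_cls [S2, S2s])) n k"
      unfolding f0_def
      by (simp add: act_coeff_diff l1_diff delta_l1 cu_e_in_Cu2nz even_proj_in_Cu2nz odd_proj_in_Cu2nz)
    also have "\<dots> = 0"
      by (simp add: act_coeff_delta cu_e_in_Cu2nz even_proj_in_Cu2nz odd_proj_in_Cu2nz cu_act_e cu_act_cls del: word_act.simps) (simp add: word_act_even_proj word_act_odd_proj)
    finally show ?thesis .
  qed
  then show ?thesis using f0_l1 by (simp add: act_kernel_def)
qed

lemma ideal_J: "ideal J A_ring"
proof -
  interpret ring A_ring by (rule ring_A_ring)
  have "carrier A_ring \<in> {I. ideal I A_ring \<and> l1_closed I \<and> f0 \<in> I}"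
    using oneideal f0_l1 by (auto simp: l1_closed_def A_ring_simps)
  then show ?thesis unfolding J_def by (intro i_Intersect) auto
qed

lemma J_subset_act_kernel: "J \<subseteq> act_kernel"
  unfolding J_def using act_kernel_ideal act_kernel_closed f0_in_act_kernel by blast

lemma act_coeff_J: "y \<in> J \<Longrightarrow> act_coeff y n k = 0"
  using J_subset_act_kernel by (auto simp: act_kernel_def)

lemma act_coeff_coset:
  assumes x: "x \<in> l1" and y: "y \<in> J +>\<^bsub>A_ring\<^esub> x"
  shows "y \<in> l1" "act_coeff y n k = act_coeff x n k"
proof -
  obtain j where j: "j \<in> J" "y = (\<lambda>s. j s + x s)"
    using y unfolding a_r_coset_def' by (auto simp: A_ring_simps)
  have "j \<in> l1" using j J_subset_act_kernel by (auto simp: act_kernel_def)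
  then show "y \<in> l1" "act_coeff y n k = act_coeff x n k"
    using j x l1_add act_coeff_add act_coeff_J by simp_all
qed

definition row_sum :: "l1elt \<Rightarrow> nat \<Rightarrow> nat set \<Rightarrow> real" where
  "row_sum y n F = (\<Sum>k\<in>F. norm (act_coeff y n k))"

text \<open>The operator norm on bounded sequences, i.e. the largest row sum; taking finite partial
  row sums avoids summability side conditions.\<close>

definition row_norm :: "l1elt \<Rightarrow> real" where
  "row_norm y = Sup {row_sum y n F | n F. finite F}"

lemma row_sums_bdd_above: "y \<in> l1 \<Longrightarrow> bdd_above {row_sum y n F | n F. finite F}"
  by (rule bdd_aboveI[of _ "l1norm y"]) (auto simp: row_sum_def row_sum_le_l1norm)

lemma row_sum_le_row_norm: "y \<in> l1 \<Longrightarrow> finite F \<Longrightarrow> row_sum y n F \<le> row_norm y"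
  unfolding row_norm_def by (rule cSup_upper) (auto intro: row_sums_bdd_above)

lemma row_norm_least: "(\<And>n F. finite F \<Longrightarrow> row_sum y n F \<le> c) \<Longrightarrow> row_norm y \<le> c"
  unfolding row_norm_def by (rule cSup_least) auto

lemma row_norm_le_l1norm: "y \<in> l1 \<Longrightarrow> row_norm y \<le> l1norm y"
  by (rule row_norm_least) (simp add: row_sum_def row_sum_le_l1norm)

lemma row_norm_nonneg: "y \<in> l1 \<Longrightarrow> 0 \<le> row_norm y"
  using row_sum_le_row_norm[of y "{}" 0] by (simp add: row_sum_def)

lemma row_summable: "x \<in> l1 \<Longrightarrow> (\<lambda>j. norm (act_coeff x n j)) summable_on UNIV"
  by (rule nonneg_bdd_above_summable_on)
     (auto intro!: bdd_aboveI[of _ "row_norm x"] simp: row_sum_le_row_norm[unfolded row_sum_def])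

lemma row_infsum_le_row_norm: "x \<in> l1 \<Longrightarrow> (\<Sum>\<^sub>\<infinity>j. norm (act_coeff x n j)) \<le> row_norm x"
  by (rule infsum_le_finite_sums[OF row_summable]) (simp_all add: row_sum_le_row_norm[unfolded row_sum_def])

lemma row_norm_add: assumes x: "x \<in> l1" and y: "y \<in> l1"
  shows "row_norm (\<lambda>s. x s + y s) \<le> row_norm x + row_norm y"
proof (rule row_norm_least)
  fix n and F :: "nat set" assume F: "finite F"
  have "row_sum (\<lambda>s. x s + y s) n F \<le> row_sum x n F + row_sum y n F"
    unfolding row_sum_def act_coeff_add[OF x y] sum.distrib[symmetric] by (rule sum_mono) (rule norm_triangle_ineq)
  also have "\<dots> \<le> row_norm x + row_norm y" using row_sum_le_row_norm[OF x F, of n] row_sum_le_row_norm[OF y F, of n] by simp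
  finally show "row_sum (\<lambda>s. x s + y s) n F \<le> row_norm x + row_norm y" .
qed

lemma row_norm_mult: assumes x: "x \<in> l1" and y: "y \<in> l1"
  shows "row_norm (conv x y) \<le> row_norm x * row_norm y"
proof (rule row_norm_least)
  fix n and F :: "nat set" assume F: "finite F"
  let ?a = "\<lambda>j. norm (act_coeff x n j)"
  note asum = row_summable[OF x, of n] and ainf = row_infsum_le_row_norm[OF x, of n]
  have bnd1: "(\<lambda>j. ?a j * l1norm y) summable_on UNIV" using asum by (rule summable_on_cmult_left)
  have sk: "(\<lambda>j. ?a j * norm (act_coeff y j k)) summable_on UNIV" for k
    by (rule summable_on_comparison_test[OF bnd1])
       (auto intro: mult_left_mono norm_act_coeff_le[OF y])
  have bnd_k: "norm (act_coeff (conv x y) n k) \<le> (\<Sum>\<^sub>\<infinity>j. ?a j * norm (act_coeff y j k))" for k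
  proof -
    have "(\<lambda>j. norm (act_coeff x n j * act_coeff y j k)) summable_on UNIV" using sk[of k] by (simp add: norm_mult)
    then have "norm (\<Sum>\<^sub>\<infinity>j. act_coeff x n j * act_coeff y j k) \<le> (\<Sum>\<^sub>\<infinity>j. norm (act_coeff x n j * act_coeff y j k))"
      by (rule norm_infsum_bound)
    then show ?thesis using act_coeff_conv(2)[OF x y] by (simp add: norm_mult)
  qed
  have sw: "(\<lambda>j. \<Sum>k\<in>F. ?a j * norm (act_coeff y j k)) summable_on UNIV \<and>
        infsum (\<lambda>j. \<Sum>k\<in>F. ?a j * norm (act_coeff y j k)) UNIV = (\<Sum>k\<in>F. infsum (\<lambda>j. ?a j * norm (act_coeff y j k)) UNIV)"
    by (rule infsum_sum_finite[OF F]) (rule sk)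
  have "row_sum (conv x y) n F \<le> (\<Sum>k\<in>F. \<Sum>\<^sub>\<infinity>j. ?a j * norm (act_coeff y j k))"
    unfolding row_sum_def by (rule sum_mono) (rule bnd_k)
  also have "\<dots> = infsum (\<lambda>j. \<Sum>k\<in>F. ?a j * norm (act_coeff y j k)) UNIV" using sw by simp
  also have "\<dots> \<le> infsum (\<lambda>j. ?a j * row_norm y) UNIV"
  proof (rule infsum_mono)
    show "(\<lambda>j. \<Sum>k\<in>F. ?a j * norm (act_coeff y j k)) summable_on UNIV" using sw by simp
    show "(\<lambda>j. ?a j * row_norm y) summable_on UNIV" using asum by (rule summable_on_cmult_left)
    fix j
    have "(\<Sum>k\<in>F. ?a j * norm (act_coeff y j k)) = ?a j * row_sum y j F"
      by (simp add: row_sum_def sum_distrib_left)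
    also have "\<dots> \<le> ?a j * row_norm y" by (rule mult_left_mono) (auto intro: row_sum_le_row_norm[OF y F])
    finally show "(\<Sum>k\<in>F. ?a j * norm (act_coeff y j k)) \<le> ?a j * row_norm y" .
  qed
  also have "\<dots> = infsum ?a UNIV * row_norm y" by (rule infsum_cmult_left')
  also have "\<dots> \<le> row_norm x * row_norm y" by (rule mult_right_mono[OF ainf row_norm_nonneg[OF y]])
  finally show "row_sum (conv x y) n F \<le> row_norm x * row_norm y" .
qed

lemma row_norm_minus: "row_norm (\<lambda>s. - x s) = row_norm x"
  by (simp add: row_norm_def row_sum_def act_coeff_minus)

lemma ring_seminorm_row_norm: "ring_seminorm A_ring row_norm"
proof (rule ring_seminorm.intro[OF ring_A_ring], rule ring_seminorm_axioms.intro)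
  show "row_norm \<zero>\<^bsub>A_ring\<^esub> = 0"
    using row_norm_le_l1norm[OF l1_zero] row_norm_nonneg[OF l1_zero]
    by (simp add: A_ring_simps l1norm_zero)
  fix f g assume f: "f \<in> carrier A_ring" and g: "g \<in> carrier A_ring"
  then show "row_norm (f \<oplus>\<^bsub>A_ring\<^esub> g) \<le> row_norm f + row_norm g"
    and "row_norm (f \<otimes>\<^bsub>A_ring\<^esub> g) \<le> row_norm f * row_norm g"
    by (simp_all add: A_ring_simps row_norm_add row_norm_mult)
  show "row_norm (\<ominus>\<^bsub>A_ring\<^esub> f) \<le> row_norm f"
    using f by (simp add: A_ring_simps A_ring_minus row_norm_minus)
qed (simp add: A_ring_simps row_norm_nonneg)

section \<open>Averages of isometries\<close>

definition isom_word :: "nat \<Rightarrow> gen list" where "isom_word j = replicate j S1 @ [S2]"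

lemma word_act_isom_word: "word_act (isom_word j) k = Some (2^j * (2*k+1))"
  by (induction j) (auto simp: isom_word_def)

lemma pow2_times_odd_inj: "(2::nat)^j * (2*k+1) = 2^j' * (2*k'+1) \<Longrightarrow> j = j' \<and> k = k'"
proof (induction j arbitrary: j')
  case 0
  then show ?case by (cases j') (auto dest!: arg_cong[where f="even::nat\<Rightarrow>bool"])
next
  case (Suc j)
  note IH = Suc.IH and P = Suc.prems
  show ?case
  proof (cases j')
    case 0
    with P show ?thesis by (auto dest!: arg_cong[where f="even::nat\<Rightarrow>bool"])
  next
    case (Suc m)
    with P have "(2::nat)^j * (2*k+1) = 2^m * (2*k'+1)" by simp
    with IH Suc show ?thesis by auto
  qed
qed

definition isom :: "nat \<Rightarrow> gen list set" where "isom j = cu_cls (isom_word j)"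

lemma cu_act_isom: "cu_act (isom j) k = Some (2^j * (2*k+1))"
  by (simp add: isom_def cu_act_cls word_act_isom_word)

lemma isom_in_Cu2nz: "isom j \<in> Cu2nz"
  by (rule Cu2nz_if_act[of _ 0]) (auto simp: isom_def cu_cls_in_Cu2 cu_act_cls word_act_isom_word)

lemma inj_isom: "inj isom"
proof (rule injI)
  fix j j' assume "isom j = isom j'"
  then have "cu_act (isom j) 0 = cu_act (isom j') 0" by simp
  then show "j = j'" using pow2_times_odd_inj[of j 0 j' 0] by (simp add: cu_act_isom)
qed

definition isoms :: "nat \<Rightarrow> gen list set set" where "isoms N = isom ` {..<N}"

definition isom_avg :: "nat \<Rightarrow> l1elt" where
  "isom_avg N s = (if s \<in> isoms N then 1 / of_nat N else 0)"

lemma isoms_subset: "isoms N \<subseteq> Cu2nz" using isom_in_Cu2nz by (auto simp: isoms_def)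

lemma finite_isoms: "finite (isoms N)" by (simp add: isoms_def)

lemma card_isoms: "card (isoms N) = N" unfolding isoms_def using inj_isom
  by (simp add: card_image inj_on_subset)

lemma isom_avg_l1: "isom_avg N \<in> l1"
proof (rule l1I)
  show "isom_avg N s = 0" if "s \<notin> Cu2nz" for s using that isoms_subset by (auto simp: isom_avg_def)
  show "(\<lambda>x. norm (isom_avg N x)) summable_on Cu2nz"
    by (rule finite_nonzero_values_imp_summable_on, rule finite_subset[OF _ finite_isoms])
       (auto simp: isom_avg_def split: if_split_asm)
qed

lemma l1norm_isom_avg: "N \<ge> 1 \<Longrightarrow> l1norm (isom_avg N) \<le> 1"
proof -
  assume N: "N \<ge> 1"
  have "l1norm (isom_avg N) = infsum (\<lambda>s. norm (isom_avg N s)) (isoms N)"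
    unfolding l1norm_def by (rule infsum_cong_neutral) (use isoms_subset in \<open>auto simp: isom_avg_def\<close>)
  also have "\<dots> = (\<Sum>s\<in>isoms N. 1 / real N)" using finite_isoms by (simp add: isom_avg_def norm_divide)
  also have "\<dots> = 1" using card_isoms N by simp
  finally show ?thesis by simp
qed

lemma act_coeff_isom_avg: "act_coeff (isom_avg N) n k = of_nat (card (isoms N \<inter> act_fiber k n)) / of_nat N"
proof -
  have "act_coeff (isom_avg N) n k = infsum (isom_avg N) (isoms N \<inter> act_fiber k n)"
    unfolding act_coeff_def by (rule infsum_cong_neutral) (auto simp: isom_avg_def)
  also have "\<dots> = (\<Sum>s\<in>isoms N \<inter> act_fiber k n. 1 / of_nat N)"
    using finite_isoms by (simp add: isom_avg_def)
  finally show ?thesis by simp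
qed

lemma row_norm_isom_avg: assumes N: "N \<ge> 1" shows "row_norm (isom_avg N) \<le> 1 / real N"
proof (rule row_norm_least)
  fix n and F :: "nat set" assume F: "finite F"
  let ?B = "\<lambda>k. isoms N \<inter> act_fiber k n"
  have fin: "finite (?B k)" for k using finite_isoms by simp
  have disj: "\<forall>i\<in>F. \<forall>j\<in>F. i \<noteq> j \<longrightarrow> ?B i \<inter> ?B j = {}"
    by (auto simp: act_fiber_def dest: cu_act_inj)
  have one: "card (\<Union>k\<in>F. ?B k) \<le> 1"
  proof -
    have fin2: "finite (\<Union>k\<in>F. ?B k)" using F fin by (intro finite_UN_I) auto
    have "a = b" if ab: "a \<in> (\<Union>k\<in>F. ?B k)" "b \<in> (\<Union>k\<in>F. ?B k)" for a b
    proof -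
      obtain j k j' k' where "a = isom j" "b = isom j'" "cu_act (isom j) k = Some n" "cu_act (isom j') k' = Some n"
        using ab by (auto simp: isoms_def act_fiber_def)
      then show ?thesis using pow2_times_odd_inj[of j k j' k'] by (auto simp: cu_act_isom)
    qed
    then have "\<forall>a\<in>(\<Union>k\<in>F. ?B k). \<forall>b\<in>(\<Union>k\<in>F. ?B k). a = b" by blast
    then show ?thesis using card_le_Suc0_iff_eq[OF fin2] by simp
  qed
  have "row_sum (isom_avg N) n F = (\<Sum>k\<in>F. real (card (?B k)) / real N)"
    unfolding row_sum_def act_coeff_isom_avg by (simp add: norm_divide)
  also have "\<dots> = real (\<Sum>k\<in>F. card (?B k)) / real N" by (simp add: sum_divide_distrib)
  also have "(\<Sum>k\<in>F. card (?B k)) = card (\<Union>k\<in>F. ?B k)"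
    using card_UN_disjoint[OF F, of ?B] fin disj by simp
  also have "real (card (\<Union>k\<in>F. ?B k)) / real N \<le> 1 / real N"
    using one N by (simp add: divide_right_mono)
  finally show "row_sum (isom_avg N) n F \<le> 1 / real N" .
qed

lemma column_sum_isom_avg:
  assumes N: "N \<ge> 1"
  shows "(\<Sum>n\<in>(\<lambda>j. 2 ^ j) ` {..<N}. norm (act_coeff (isom_avg N) n 0)) = 1"
proof -
  have inj: "inj_on (\<lambda>j. (2::nat) ^ j) {..<N}" by (auto simp: inj_on_def)
  have fiber: "isoms N \<inter> act_fiber 0 (2 ^ j) = {isom j}" if "j < N" for j
  proof -
    have "s = isom j" if "s \<in> isoms N \<inter> act_fiber 0 (2 ^ j)" for s
      using that pow2_times_odd_inj[of _ 0 j 0] by (auto simp: isoms_def act_fiber_def cu_act_isom)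
    moreover have "isom j \<in> isoms N \<inter> act_fiber 0 (2 ^ j)"
      using \<open>j < N\<close> isom_in_Cu2nz by (auto simp: isoms_def act_fiber_def cu_act_isom)
    ultimately show ?thesis by blast
  qed
  have "(\<Sum>n\<in>(\<lambda>j. 2 ^ j) ` {..<N}. norm (act_coeff (isom_avg N) n 0))
      = (\<Sum>j<N. norm (act_coeff (isom_avg N) (2 ^ j) 0))"
    by (simp add: sum.reindex[OF inj])
  also have "\<dots> = (\<Sum>j<N. 1 / real N)"
    by (rule sum.cong) (auto simp: act_coeff_isom_avg fiber norm_divide)
  also have "\<dots> = 1" using N by simp
  finally show ?thesis .
qed

lemma qnorm_eq_quot_seminorm: "qnorm = quot_seminorm l1norm"
  by (simp add: fun_eq_iff qnorm_def quot_seminorm_def Setcompr_eq_image)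

lemma ring_seminorm_qnorm: "ring_seminorm AJ qnorm"
  unfolding qnorm_eq_quot_seminorm AJ_def
  by (rule ring_seminorm.quot_seminorm_ring_seminorm[OF ring_seminorm_l1norm ideal_J])

lemma ring_seminorm_quot_row_norm: "ring_seminorm AJ (quot_seminorm row_norm)"
  unfolding AJ_def
  by (rule ring_seminorm.quot_seminorm_ring_seminorm[OF ring_seminorm_row_norm ideal_J])

lemma quot_row_norm_le_qnorm: "C \<in> carrier AJ \<Longrightarrow> quot_seminorm row_norm C \<le> qnorm C"
  unfolding qnorm_eq_quot_seminorm AJ_def
  by (rule ring_seminorm.quot_seminorm_mono[OF ring_seminorm_l1norm ideal_J ring_seminorm_row_norm])
     (simp_all add: A_ring_simps row_norm_le_l1norm)

lemma coset_J_carrier: "x \<in> l1 \<Longrightarrow> J +>\<^bsub>A_ring\<^esub> x \<in> carrier AJ"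
  by (auto simp: AJ_def FactRing_def A_RCOSETS_def' A_ring_simps)

lemma coset_J_self:
  assumes "x \<in> l1" shows "x \<in> J +>\<^bsub>A_ring\<^esub> x"
proof -
  interpret J: ideal J A_ring by (rule ideal_J)
  show ?thesis using assms by (simp add: J.a_rcos_self A_ring_simps)
qed

lemma qnorm_isom_avg_ge:
  assumes N: "N \<ge> 1"
  shows "1 \<le> qnorm (J +>\<^bsub>A_ring\<^esub> isom_avg N)"
  unfolding qnorm_eq_quot_seminorm
proof (rule ring_seminorm.le_quot_seminorm[OF ring_seminorm_l1norm ideal_J])
  show "J +>\<^bsub>A_ring\<^esub> isom_avg N \<in> carrier (A_ring Quot J)"
    using coset_J_carrier[OF isom_avg_l1] by (simp add: AJ_def)
  fix y assume y: "y \<in> J +>\<^bsub>A_ring\<^esub> isom_avg N"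
  have "1 = (\<Sum>n\<in>(\<lambda>j. 2 ^ j) ` {..<N}. norm (act_coeff y n 0))"
    using column_sum_isom_avg[OF N] act_coeff_coset(2)[OF isom_avg_l1 y] by simp
  also have "\<dots> \<le> l1norm y"
    by (rule column_sum_le_l1norm[OF act_coeff_coset(1)[OF isom_avg_l1 y]]) simp
  finally show "1 \<le> l1norm y" .
qed

lemma quot_row_norm_one: "1 \<le> quot_seminorm row_norm \<one>\<^bsub>AJ\<^esub>"
proof -
  have e: "delta cu_e \<in> l1" by (rule delta_l1[OF cu_e_in_Cu2nz])
  have "\<one>\<^bsub>AJ\<^esub> = J +>\<^bsub>A_ring\<^esub> delta cu_e"
    by (simp add: AJ_def FactRing_def A_ring_simps)
  moreover have "1 \<le> quot_seminorm row_norm (J +>\<^bsub>A_ring\<^esub> delta cu_e)"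
  proof (rule ring_seminorm.le_quot_seminorm[OF ring_seminorm_row_norm ideal_J])
    show "J +>\<^bsub>A_ring\<^esub> delta cu_e \<in> carrier (A_ring Quot J)"
      using coset_J_carrier[OF e] by (simp add: AJ_def)
    fix y assume y: "y \<in> J +>\<^bsub>A_ring\<^esub> delta cu_e"
    have "1 = row_sum y 0 {0}"
      using act_coeff_coset(2)[OF e y] by (simp add: row_sum_def act_coeff_delta cu_e_in_Cu2nz cu_act_e)
    also have "\<dots> \<le> row_norm y" by (rule row_sum_le_row_norm[OF act_coeff_coset(1)[OF e y]]) simp
    finally show "1 \<le> row_norm y" .
  qed
  ultimately show ?thesis by simp
qed

definition avg_seq :: "nat \<Rightarrow> l1elt set" where
  "avg_seq n = J +>\<^bsub>A_ring\<^esub> isom_avg (Suc n)"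

lemma avg_seq_null_in_row_norm:
  assumes "nonprincipal U"
  shows "avg_seq \<in> null_seqs AJ qnorm (quot_seminorm row_norm) U"
proof -
  have carrier: "avg_seq n \<in> carrier AJ" and rep: "isom_avg (Suc n) \<in> avg_seq n" for n
    unfolding avg_seq_def by (simp_all add: coset_J_carrier coset_J_self isom_avg_l1)
  then have carrier': "avg_seq n \<in> carrier (A_ring Quot J)" for n by (simp add: AJ_def)
  have "qnorm (avg_seq n) \<le> 1" for n
  proof -
    have "qnorm (avg_seq n) \<le> l1norm (isom_avg (Suc n))"
      unfolding qnorm_eq_quot_seminorm
      by (rule ring_seminorm.quot_seminorm_le[OF ring_seminorm_l1norm ideal_J carrier' rep])
    also have "\<dots> \<le> 1" by (rule l1norm_isom_avg) simp
    finally show ?thesis .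
  qed
  then have bounded: "avg_seq \<in> carrier (linf AJ qnorm)"
    using carrier by (auto simp: linf_carrier)
  have "quot_seminorm row_norm (avg_seq n) \<le> 1 / real (Suc n)" for n
    using order_trans[OF ring_seminorm.quot_seminorm_le[OF ring_seminorm_row_norm ideal_J carrier' rep]
        row_norm_isom_avg[of "Suc n"]] by simp
  moreover have "((\<lambda>n. 1 / real (Suc n)) \<longlongrightarrow> 0) U"
    using tendsto_mono[OF nonprincipal_le_sequentially[OF assms] LIMSEQ_inverse_real_of_nat]
    by (simp add: inverse_eq_divide)
  ultimately have "((\<lambda>n. quot_seminorm row_norm (avg_seq n)) \<longlongrightarrow> 0) U"
    by (intro ring_seminorm.tendsto_zero_le[OF ring_seminorm_quot_row_norm carrier])
  then show ?thesis using bounded by (simp add: null_seqs_def)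
qed

lemma avg_seq_not_null:
  assumes U: "U \<noteq> bot"
  shows "avg_seq \<notin> cU AJ qnorm U"
proof
  assume "avg_seq \<in> cU AJ qnorm U"
  then have "((\<lambda>n. qnorm (avg_seq n)) \<longlongrightarrow> 0) U" by (simp add: cU_def)
  moreover have "1 \<le> qnorm (avg_seq n)" for n
    unfolding avg_seq_def by (rule qnorm_isom_avg_ge) simp
  ultimately show False
    using tendsto_lowerbound[OF _ _ U, of "\<lambda>n. qnorm (avg_seq n)" 0 1] by simp
qed

theorem theorem3p22:
  fixes U :: "nat filter"
  assumes "nat_ultrafilter U" and "nonprincipal U"
  shows "\<not> simple_ring (ultrapower AJ qnorm U) \<and> \<not> purely_infinite (ultrapower AJ qnorm U)"
proof -
  have U: "U \<noteq> bot" using assms(1) by (simp add: nat_ultrafilter_def)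
  have "quot_seminorm row_norm \<one>\<^bsub>AJ\<^esub> \<noteq> 0" using quot_row_norm_one by simp
  then show ?thesis
    by (intro ring_seminorm.ultrapower_not_simple_not_purely_infinite[OF ring_seminorm_qnorm
        ring_seminorm_quot_row_norm quot_row_norm_le_qnorm U _
        avg_seq_null_in_row_norm[OF assms(2)] avg_seq_not_null[OF U]])
qed

end
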